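(* Let $V$ be a finite set and $\mathcal{F}\subseteq 2^V$ a minimal hereditary family with $\delta(\mathcal{F})\ge 12$. Then: (1) for every $x\in V$, $u(x)\ge 5.3+\varepsilon(x)$; (2) $u(x)<5.3$ if and only if $x$ is mini-weight; (3) if $u(x)>5.3$, then $u(x)>5.3+\varepsilon(x)$; (4) if $u(x)=5.3$, then either $f_1(x)=5,f_2(x)=6,f_3(x)=0$, or $f_1(x)=4,f_2(x)=6,f_3(x)=1$.
   Context: Let $V$ be a finite set. A family $\mathcal{F}\subseteq 2^V$ is hereditary if $F'\subseteq F\in\mathcal{F}$ implies $F'\in\mathcal{F}$. For $x\in V$: the link is $\mathcal{F}(x)=\{F\setminus\{x\}: x\in F\in\mathcal{F}\}$, $d_{\mathcal{F}}(x)=|\mathcal{F}(x)|$, $\delta(\mathcal{F})=\min_{x\in V}d_{\mathcal{F}}(x)$. For $A\subseteq V$, $d_{\mathcal{F}}(A)=|\{F\in\mathcal{F}: A\subseteq F\}|$. A set $F\in\mathcal{F}$ is maximal if no other member strictly contains it; a hereditary $\mathcal{F}$ with $\delta(\mathcal{F})\ge 12$ is minimal if $\delta(\mathcal{F}\setminus\{F\})\le 11$ for every maximal $F\in\mathcal{F}$. $f_i(x)$ denotes the number of $i$-element sets in $\mathcal{F}(x)$. A vertex $x$ is mini-weight if $f_1(x)=4$, $f_2(x)=5$, $f_3(x)=2$. $\mathcal{Q}=\{Q\in\mathcal{F}:|Q|=4\}$ and $\mathcal{Q}(x)=\{Q\in\mathcal{Q}: x\in Q\}$. Weights: for $x\in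 F\in\mathcal{F}$ define $\omega(x,F)$ as follows. If $|F|\ne 3$, $\omega(x,F)=1/|F|$. If $|F|=3$: if $F$ is contained in some 4-element member of $\mathcal{F}$, every element of $F$ gets $\omega=1/3$; otherwise order the three 2-subsets of $F$ as $e_1,e_2,e_3$ with $d_{\mathcal{F}}(e_1)\le d_{\mathcal{F}}(e_2)\le d_{\mathcal{F}}(e_3)$; if $d_{\mathcal{F}}(e_2)\le 4<d_{\mathcal{F}}(e_3)$, the two elements of $e_3$ get $\omega=7/20$ and the element of $F\setminus e_3$ gets $6/20$; else if $d_{\mathcal{F}}(e_1)\le 4<d_{\mathcal{F}}(e_2)$, the two elements of $e_1$ get $7/20$ and the element of $F\setminus e_1$ gets $6/20$; otherwise every element of $F$ gets $1/3$. The weight of $x$ is $u(x)=\sum_{x\in F\in\mathcal{F}}\omega(x,F)$. Perturbation: for $Q\in\mathcal{Q}$ let $c(Q)$ be the number of mini-weight vertices in $Q$ (one has $c(Q)\le 3$). For $x\in Q\in\mathcal{Q}$ set $\varepsilon(x,Q)=-\frac{1}{15}$ if $x$ is mini-weight and $\varepsilon(x,Q)=\frac{c(Q)}{15(4-c(Q))}$ otherwise; and $\varepsilon(x)=\sum_{Q\in\mathcal{Q}(x)}\varepsilon(x,Q)$ (so $\varepsilon(x)=0$ if $\mathcal{Q}(x)=\emptyset$). *)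

theory Defs
  imports Complex_Main
begin

definition hereditary :: "'a set set \<Rightarrow> bool" where
  "hereditary \<F> \<longleftrightarrow> (\<forall>F F'. F \<in> \<F> \<and> F' \<subseteq> F \<longrightarrow> F' \<in> \<F>)"

definition link :: "'a set set \<Rightarrow> 'a \<Rightarrow> 'a set set" where
  "link \<F> x = {F - {x} | F. F \<in> \<F> \<and> x \<in> F}"

definition deg :: "'a set set \<Rightarrow> 'a \<Rightarrow> nat" where
  "deg \<F> x = card (link \<F> x)"

definition min_deg :: "'a set \<Rightarrow> 'a set set \<Rightarrow> nat" where
  "min_deg V \<F> = Min (deg \<F> ` V)"

definition set_deg :: "'a set set \<Rightarrow> 'a set \<Rightarrow> nat" where
  "set_deg \<F> A = card {F \<in> \<F>. A \<subseteq> F}"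

definition maximal_in :: "'a set set \<Rightarrow> 'a set \<Rightarrow> bool" where
  "maximal_in \<F> F \<longleftrightarrow> F \<in> \<F> \<and> \<not> (\<exists>G \<in> \<F>. F \<subset> G)"

definition minimal_family :: "'a set \<Rightarrow> 'a set set \<Rightarrow> bool" where
  "minimal_family V \<F> \<longleftrightarrow> hereditary \<F> \<and> min_deg V \<F> \<ge> 12 \<and>
     (\<forall>F. maximal_in \<F> F \<longrightarrow> min_deg V (\<F> - {F}) \<le> 11)"

definition f_i :: "'a set set \<Rightarrow> nat \<Rightarrow> 'a \<Rightarrow> nat" where
  "f_i \<F> i x = card {G \<in> link \<F> x. card G = i}"

definition mini_weight :: "'a set set \<Rightarrow> 'a \<Rightarrow> bool" where
  "mini_weight \<F> x \<longleftrightarrow> f_i \<F> 1 x = 4 \<and> f_i \<F> 2 x = 5 \<and> f_i \<F> 3 x = 2"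

definition ordered_pairs :: "'a set set \<Rightarrow> 'a set \<Rightarrow> 'a set \<Rightarrow> 'a set \<Rightarrow> 'a set \<Rightarrow> bool" where
  "ordered_pairs \<F> F e1 e2 e3 \<longleftrightarrow>
     e1 \<noteq> e2 \<and> e1 \<noteq> e3 \<and> e2 \<noteq> e3 \<and>
     e1 \<subseteq> F \<and> e2 \<subseteq> F \<and> e3 \<subseteq> F \<and> card e1 = 2 \<and> card e2 = 2 \<and> card e3 = 2 \<and>
     set_deg \<F> e1 \<le> set_deg \<F> e2 \<and> set_deg \<F> e2 \<le> set_deg \<F> e3"

definition omega :: "'a set set \<Rightarrow> 'a \<Rightarrow> 'a set \<Rightarrow> real" where
  "omega \<F> x F =
    (if card F \<noteq> 3 then 1 / real (card F)
     else if (\<exists>Q \<in> \<F>. card Q = 4 \<and> F \<subseteq> Q) then 1/3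
     else if (\<exists>e1 e2 e3. ordered_pairs \<F> F e1 e2 e3 \<and> set_deg \<F> e2 \<le> 4 \<and> 4 < set_deg \<F> e3)
       then (if (\<exists>e1 e2 e3. ordered_pairs \<F> F e1 e2 e3 \<and> set_deg \<F> e2 \<le> 4 \<and> 4 < set_deg \<F> e3
                 \<and> x \<in> e3) then 7/20 else 6/20)
     else if (\<exists>e1 e2 e3. ordered_pairs \<F> F e1 e2 e3 \<and> set_deg \<F> e1 \<le> 4 \<and> 4 < set_deg \<F> e2)
       then (if (\<exists>e1 e2 e3. ordered_pairs \<F> F e1 e2 e3 \<and> set_deg \<F> e1 \<le> 4 \<and> 4 < set_deg \<F> e2
                 \<and> x \<in> e1) then 7/20 else 6/20)
     else 1/3)"

definition weight :: "'a set set \<Rightarrow> 'a \<Rightarrow> real" where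
  "weight \<F> x = (\<Sum>F \<in> {F \<in> \<F>. x \<in> F}. omega \<F> x F)"

definition cQ :: "'a set set \<Rightarrow> 'a set \<Rightarrow> nat" where
  "cQ \<F> Q = card {y \<in> Q. mini_weight \<F> y}"

definition eps_Q :: "'a set set \<Rightarrow> 'a \<Rightarrow> 'a set \<Rightarrow> real" where
  "eps_Q \<F> x Q = (if mini_weight \<F> x then - 1/15
                  else real (cQ \<F> Q) / (15 * (4 - real (cQ \<F> Q))))"

definition eps :: "'a set set \<Rightarrow> 'a \<Rightarrow> real" where
  "eps \<F> x = (\<Sum>Q \<in> {Q \<in> \<F>. card Q = 4 \<and> x \<in> Q}. eps_Q \<F> x Q)"

end

theory Submission
  imports Defs
begin

text \<open>Sort the members of \<open>\<F>\<close> through \<open>x\<close> by size: \<open>{x}\<close>, \<open>n\<close> edges, \<open>m\<close> triples,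
  \<open>t\<close> quadruples and \<open>r\<close> larger sets, so \<open>u(x) = 1 + n/2 + (weight of the triples) + t/4 + (rest \<ge> 0)\<close>
  and \<open>1 + n + m + t + r \<ge> 12\<close>. Every triple weighs at least \<open>3/10\<close>, and the \<open>3\<close> triples through
  \<open>x\<close> inside a quadruple weigh \<open>1/3\<close>; two quadruples through \<open>x\<close> contain at least \<open>5\<close> such
  triples, three at least \<open>6\<close>, and a set of size \<open>\<ge> 5\<close> yields \<open>4\<close> quadruples. Together with
  \<open>m \<le> n choose 2\<close> this leaves a handful of profiles \<open>(n, m, t)\<close>; in each tight one the missing
  weight comes either from an uncovered triple of weight \<open>7/20\<close> or from the perturbation, using
  that a mini-weight vertex lies in only two quadruples, whose triples exhaust its \<open>5\<close> triples.
  Only heredity and \<open>\<delta>(\<F>) \<ge> 12\<close> are needed, not minimality.\<close>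

definition layer :: "'a set set \<Rightarrow> 'a \<Rightarrow> nat \<Rightarrow> 'a set set" where
  "layer \<F> x k = {F \<in> \<F>. x \<in> F \<and> card F = k}"

definition big_layer :: "'a set set \<Rightarrow> 'a \<Rightarrow> 'a set set" where
  "big_layer \<F> x = {F \<in> \<F>. x \<in> F \<and> 5 \<le> card F}"

definition facets_at :: "'a \<Rightarrow> 'a set \<Rightarrow> 'a set set" where
  "facets_at x Q = {G. G \<subseteq> Q \<and> x \<in> G \<and> card G = 3}"

definition nbhd :: "'a set set \<Rightarrow> 'a \<Rightarrow> 'a set" where
  "nbhd \<F> x = {y. y \<noteq> x \<and> {x, y} \<in> \<F>}"

definition triple_weight :: "'a set set \<Rightarrow> 'a \<Rightarrow> real" where
  "triple_weight \<F> x = (\<Sum>F \<in> layer \<F> x 3. omega \<F> x F)"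

definition quad_slack :: "'a set set \<Rightarrow> 'a \<Rightarrow> real" where
  "quad_slack \<F> x = (\<Sum>Q \<in> layer \<F> x 4. 1/4 - eps_Q \<F> x Q)"

definition big_weight :: "'a set set \<Rightarrow> 'a \<Rightarrow> real" where
  "big_weight \<F> x = (\<Sum>F \<in> big_layer \<F> x. omega \<F> x F)"

section \<open>Arithmetic of the profiles\<close>

lemma profile_n_ge_4:
  fixes n m t r :: nat
  assumes deg: "12 \<le> 1 + n + m + t + r" and triples: "m \<le> n choose 2"
    and big: "r \<noteq> 0 \<Longrightarrow> 4 \<le> t" and two_quads: "2 \<le> t \<Longrightarrow> 5 \<le> m"
  shows "4 \<le> n"
proof (rule ccontr)
  assume "\<not> 4 \<le> n"
  then have "n = 0 \<or> n = 1 \<or> n = 2 \<or> n = 3"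
    by linarith
  then have "n choose 2 \<le> 3"
    by (auto simp: choose_two)
  then have "m \<le> 3" "n \<le> 3"
    using triples \<open>\<not> 4 \<le> n\<close> by linarith+
  moreover have "t \<le> 1"
    using two_quads \<open>m \<le> 3\<close> by (cases "2 \<le> t") auto
  ultimately show False
    using deg big by fastforce
qed

text \<open>Here \<open>n, m, t, r\<close> count the edges, triples, quadruples and larger sets through \<open>x\<close>;
  \<open>S\<close>, \<open>P\<close>, \<open>B\<close> stand for \<open>triple_weight\<close>, \<open>quad_slack\<close> and \<open>big_weight\<close>, and
  \<open>case_nmt\<close> is the extra information available for the profile \<open>(n, m, t)\<close>. The two tight
  profiles of the second disjunct are those where \<open>\<epsilon>(x) = 0\<close>.\<close>
lemma weight_case_analysis:
  fixes n m t r :: nat and S P B :: real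
  assumes deg: "12 \<le> 1 + n + m + t + r"
    and triples: "m \<le> n choose 2"
    and big: "r \<noteq> 0 \<Longrightarrow> 4 \<le> t"
    and three_quads: "3 \<le> t \<Longrightarrow> 6 \<le> m"
    and S0: "3/10 * m \<le> S"
    and S1: "t = 1 \<Longrightarrow> 3/10 * m + 1/10 \<le> S"
    and S2: "2 \<le> t \<Longrightarrow> 5 \<le> m \<and> 3/10 * m + 1/6 \<le> S"
    and P: "t / 20 \<le> P" and B: "0 \<le> B"
    and not_mini: "\<not> (n = 4 \<and> m = 5 \<and> t = 2)"
    and case_461: "n = 4 \<Longrightarrow> m = 6 \<Longrightarrow> t = 1 \<Longrightarrow> 41/20 \<le> S"
    and case_551: "n = 5 \<Longrightarrow> m = 5 \<Longrightarrow> t = 1 \<Longrightarrow> 33/20 \<le> S \<and> 11/60 \<le> P"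
    and case_462: "n = 4 \<Longrightarrow> m = 6 \<Longrightarrow> t = 2 \<Longrightarrow> 22/60 \<le> P"
    and case_52: "m = 5 \<Longrightarrow> t = 2 \<Longrightarrow> 5/3 \<le> S \<and> 14/60 \<le> P"
    and case_43: "n = 4 \<Longrightarrow> 3 \<le> t \<Longrightarrow> 33/60 \<le> P"
  shows "53/10 < 1 + n/2 + S + P + B \<or>
    ((n = 5 \<and> m = 6 \<and> t = 0 \<or> n = 4 \<and> m = 6 \<and> t = 1) \<and> 53/10 \<le> 1 + n/2 + S + t/4 + B)"
proof -
  have n4: "4 \<le> n"
    using profile_n_ge_4[OF deg triples big] S2 by blast
  have m6: "n = 4 \<Longrightarrow> m \<le> 6"
    using triples by (simp add: choose_two)
  consider "t = 0" | "t = 1" | "t = 2" | "3 \<le> t"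
    by linarith
  then show ?thesis
  proof cases
    case 1
    then have "r = 0"
      using big by fastforce
    then have "11 \<le> n + m"
      using deg 1 by simp
    consider "n = 4" | "n = 5" "m = 6" | "n = 5" "7 \<le> m" | "6 \<le> n"
      using n4 \<open>11 \<le> n + m\<close> by linarith
    then show ?thesis
      by cases (use 1 m6 S0 P B \<open>11 \<le> n + m\<close> in \<open>auto simp flip: of_nat_add\<close>)
  next
    case 2
    then have "r = 0"
      using big by fastforce
    then have "10 \<le> n + m"
      using deg 2 by simp
    consider "n = 4" "m = 6" | "n = 5" "m = 5" | "5 \<le> n" "6 \<le> m" | "6 \<le> n"
      using n4 m6 \<open>10 \<le> n + m\<close> by linarith
    then show ?thesis
      by cases (use 2 S1 case_461 case_551 P B \<open>10 \<le> n + m\<close> in \<open>auto simp flip: of_nat_add\<close>)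
  next
    case 3
    then have "5 \<le> m"
      using S2 by simp
    consider "n = 4" "m = 6" | "5 \<le> n" "m = 5" | "5 \<le> n" "6 \<le> m"
      using n4 m6 not_mini 3 \<open>5 \<le> m\<close> by linarith
    then show ?thesis
      by cases (use 3 S2 case_462 case_52 P B in auto)
  next
    case 4
    then have "6 \<le> m" "3/20 \<le> P"
      using three_quads P by auto
    consider "n = 4" | "5 \<le> n"
      using n4 by linarith
    then show ?thesis
      by cases (use 4 S2 case_43 B \<open>6 \<le> m\<close> \<open>3/20 \<le> P\<close> in auto)
  qed
qed

lemma facets_at_eq:
  assumes "finite Q" "card Q = 4" "x \<in> Q"
  shows "facets_at x Q = (\<lambda>y. Q - {y}) ` (Q - {x})"
proof
  show "facets_at x Q \<subseteq> (\<lambda>y. Q - {y}) ` (Q - {x})"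
  proof
    fix G assume "G \<in> facets_at x Q"
    then have G: "G \<subseteq> Q" "x \<in> G" "card G = 3"
      by (auto simp: facets_at_def)
    then have "card (Q - G) = 1"
      using assms by (simp add: card_Diff_subset finite_subset)
    then obtain y where y: "Q - G = {y}"
      by (auto simp: card_Suc_eq)
    then show "G \<in> (\<lambda>y. Q - {y}) ` (Q - {x})"
      using G by (intro image_eqI[of _ _ y]) blast+
  qed
  show "(\<lambda>y. Q - {y}) ` (Q - {x}) \<subseteq> facets_at x Q"
    using assms by (auto simp: facets_at_def)
qed

lemma card_facets_at:
  assumes "finite Q" "card Q = 4" "x \<in> Q"
  shows "card (facets_at x Q) = 3"
proof -
  have "inj_on (\<lambda>y. Q - {y}) (Q - {x})"
    by (auto simp: inj_on_def)
  then show ?thesis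
    using assms by (simp add: facets_at_eq card_image)
qed

lemma finite_facets_at: "finite Q \<Longrightarrow> finite (facets_at x Q)"
  by (rule finite_subset[of _ "Pow Q"]) (auto simp: facets_at_def)

lemma Un_of_distinct_triples:
  assumes "card G1 = 3" "card G2 = 3" "G1 \<noteq> G2" "G1 \<union> G2 \<subseteq> Q" "finite Q" "card Q = 4"
  shows "G1 \<union> G2 = Q"
proof (rule card_subset_eq)
  have fin: "finite G1" "finite G2"
    using assms(1,2) card.infinite by force+
  have "\<not> G2 \<subseteq> G1"
    using card_subset_eq[OF fin(1)] assms(1-3) by metis
  then have "G1 \<subset> G1 \<union> G2"
    by blast
  then have "3 < card (G1 \<union> G2)"
    using psubset_card_mono fin assms(1) by (metis finite_UnI)
  then show "card (G1 \<union> G2) = card Q"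
    using card_mono[OF assms(5,4)] assms(6) by linarith
qed (use assms in auto)

lemma card_facets_at_Int_le_1:
  assumes "finite Q1" "card Q1 = 4" "finite Q2" "card Q2 = 4" "Q1 \<noteq> Q2"
  shows "card (facets_at x Q1 \<inter> facets_at x Q2) \<le> 1"
proof -
  have "G1 = G2" if "G1 \<in> facets_at x Q1 \<inter> facets_at x Q2" "G2 \<in> facets_at x Q1 \<inter> facets_at x Q2" for G1 G2
  proof (rule ccontr)
    assume "G1 \<noteq> G2"
    have G: "card G1 = 3" "card G2 = 3" "G1 \<union> G2 \<subseteq> Q1" "G1 \<union> G2 \<subseteq> Q2"
      using that by (auto simp: facets_at_def)
    have "G1 \<union> G2 = Q1"
      using Un_of_distinct_triples[OF G(1,2) \<open>G1 \<noteq> G2\<close> G(3) assms(1,2)] .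
    moreover have "G1 \<union> G2 = Q2"
      using Un_of_distinct_triples[OF G(1,2) \<open>G1 \<noteq> G2\<close> G(4) assms(3,4)] .
    ultimately show False
      using assms(5) by simp
  qed
  then show ?thesis
    using finite_facets_at[OF assms(1)] by (auto simp: card_le_Suc0_iff_eq)
qed

lemma obtain_diff_elem:
  assumes "finite Q2" "card Q1 = card Q2" "Q1 \<noteq> Q2" "x \<in> Q2"
  obtains a where "a \<in> Q1" "a \<notin> Q2" "a \<noteq> x"
proof -
  have "\<not> Q1 \<subseteq> Q2"
    using card_subset_eq assms by blast
  then show ?thesis
    using that assms(4) by blast
qed

lemma doubleton_subset_triple:
  assumes "e \<subseteq> {x, z, w}" "card e = 2"
  shows "e = {x, z} \<or> e = {x, w} \<or> e = {z, w}"
proof -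
  obtain a b where "e = {a, b}" "a \<noteq> b"
    using assms(2) unfolding card_2_iff by blast
  then show ?thesis
    using assms(1) by auto
qed

lemma obtain_two_elems:
  assumes "2 \<le> card S"
  obtains a b where "a \<in> S" "b \<in> S" "a \<noteq> b"
proof -
  obtain T where "T \<subseteq> S" "card T = 2"
    using obtain_subset_with_card_n[OF assms] by blast
  then show ?thesis
    using that unfolding card_2_iff by blast
qed

lemma obtain_three_elems:
  assumes "3 \<le> card S"
  obtains a b c where "a \<in> S" "b \<in> S" "c \<in> S" "a \<noteq> b" "a \<noteq> c" "b \<noteq> c"
proof -
  obtain T where "T \<subseteq> S" "card T = 3"
    using obtain_subset_with_card_n[OF assms] by blast
  then show ?thesis
    using that unfolding card_3_iff by blast
qed

lemma three_subsets_of_card_3_meet: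
  assumes N: "finite N" "card N = 4" and sub: "A \<subseteq> N" "B \<subseteq> N" "C \<subseteq> N"
    and card: "card A = 3" "card B = 3" "card C = 3"
  shows "A \<inter> B \<inter> C \<noteq> {}"
proof -
  have fin: "finite A" "finite B" "finite C"
    using sub N(1) finite_subset by blast+
  have "card (A \<union> B) \<le> 4"
    using card_mono[OF N(1)] sub N(2) by (metis Un_least)
  then have "2 \<le> card (A \<inter> B)"
    using card_Un_Int[OF fin(1,2)] card by simp
  moreover have "card ((A \<inter> B) \<union> C) \<le> 4"
    using card_mono[OF N(1)] sub N(2) by (metis Int_lower1 Un_least order_trans)
  ultimately have "1 \<le> card (A \<inter> B \<inter> C)"
    using card_Un_Int[of "A \<inter> B" C] fin card by simp
  then show ?thesis
    by auto
qed

section \<open>The weights \<open>\<omega>\<close> and the perturbation\<close>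

lemma omega_card_ne_3: "card F \<noteq> 3 \<Longrightarrow> omega \<F> x F = 1 / real (card F)"
  by (simp add: omega_def)

lemma omega_covered:
  "card F = 3 \<Longrightarrow> Q \<in> \<F> \<Longrightarrow> card Q = 4 \<Longrightarrow> F \<subseteq> Q \<Longrightarrow> omega \<F> x F = 1/3"
  unfolding omega_def by auto

lemma omega_card_3_ge: "card F = 3 \<Longrightarrow> 3/10 \<le> omega \<F> x F"
  unfolding omega_def by auto

lemma ordered_pairs_triple:
  assumes "ordered_pairs \<F> {x, z, w} e1 e2 e3"
  shows "e1 \<in> {{x, z}, {x, w}, {z, w}}" "e2 \<in> {{x, z}, {x, w}, {z, w}}" "e3 \<in> {{x, z}, {x, w}, {z, w}}"
proof -
  have "e1 \<subseteq> {x, z, w}" "card e1 = 2" "e2 \<subseteq> {x, z, w}" "card e2 = 2" "e3 \<subseteq> {x, z, w}" "card e3 = 2"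
    using assms unfolding ordered_pairs_def by auto
  then show "e1 \<in> {{x, z}, {x, w}, {z, w}}" "e2 \<in> {{x, z}, {x, w}, {z, w}}" "e3 \<in> {{x, z}, {x, w}, {z, w}}"
    using doubleton_subset_triple by simp_all
qed

lemma omega_unique_heavy_pair:
  assumes "x \<noteq> z" "x \<noteq> w" "z \<noteq> w"
    and uncovered: "\<not> (\<exists>Q \<in> \<F>. card Q = 4 \<and> {x, z, w} \<subseteq> Q)"
    and heavy: "4 < set_deg \<F> {x, z}" and light: "set_deg \<F> {x, w} \<le> 4"
    and rest: "set_deg \<F> {z, w} \<le> 4"
  shows "omega \<F> x {x, z, w} = 7/20"
proof -
  have card_T: "card {x, z, w} = 3"
    using assms by simp
  have pairs: "{x, z} \<noteq> {x, w}" "{x, z} \<noteq> {z, w}" "{x, w} \<noteq> {z, w}"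
    "{x, w} \<noteq> {x, z}" "{z, w} \<noteq> {x, z}" "{z, w} \<noteq> {x, w}"
    "{x, z} \<subseteq> {x, z, w}" "{x, w} \<subseteq> {x, z, w}" "{z, w} \<subseteq> {x, z, w}"
    "card {x, z} = 2" "card {x, w} = 2" "card {z, w} = 2"
    using assms(1-3) by (auto simp: doubleton_eq_iff)
  obtain e1 e2 where E: "ordered_pairs \<F> {x, z, w} e1 e2 {x, z}" "set_deg \<F> e2 \<le> 4"
  proof (cases "set_deg \<F> {x, w} \<le> set_deg \<F> {z, w}")
    case le: True
    have "ordered_pairs \<F> {x, z, w} {x, w} {z, w} {x, z}"
      unfolding ordered_pairs_def using pairs le rest heavy by auto
    then show ?thesis
      using that rest by blast
  next
    case False
    have "ordered_pairs \<F> {x, z, w} {z, w} {x, w} {x, z}"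
      unfolding ordered_pairs_def using pairs False heavy light by auto
    then show ?thesis
      using that light by blast
  qed
  have "\<exists>e1 e2 e3. ordered_pairs \<F> {x, z, w} e1 e2 e3 \<and> set_deg \<F> e2 \<le> 4 \<and> 4 < set_deg \<F> e3"
    "\<exists>e1 e2 e3. ordered_pairs \<F> {x, z, w} e1 e2 e3 \<and> set_deg \<F> e2 \<le> 4 \<and> 4 < set_deg \<F> e3 \<and> x \<in> e3"
    using E heavy by blast+
  then show ?thesis
    unfolding omega_def using card_T uncovered by simp
qed

lemma omega_unique_light_pair:
  assumes "x \<noteq> z" "x \<noteq> w" "z \<noteq> w"
    and uncovered: "\<not> (\<exists>Q \<in> \<F>. card Q = 4 \<and> {x, z, w} \<subseteq> Q)"
    and heavy: "4 < set_deg \<F> {x, z}" and light: "set_deg \<F> {x, w} \<le> 4"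
    and rest: "4 < set_deg \<F> {z, w}"
  shows "omega \<F> x {x, z, w} = 7/20"
proof -
  have card_T: "card {x, z, w} = 3"
    using assms by simp
  have pairs: "{x, z} \<noteq> {x, w}" "{x, z} \<noteq> {z, w}" "{x, w} \<noteq> {z, w}"
    "{x, w} \<noteq> {x, z}" "{z, w} \<noteq> {x, z}" "{z, w} \<noteq> {x, w}"
    "{x, z} \<subseteq> {x, z, w}" "{x, w} \<subseteq> {x, z, w}" "{z, w} \<subseteq> {x, z, w}"
    "card {x, z} = 2" "card {x, w} = 2" "card {z, w} = 2"
    using assms(1-3) by (auto simp: doubleton_eq_iff)
  have no_heavy_e3: "\<not> (\<exists>e1 e2 e3. ordered_pairs \<F> {x, z, w} e1 e2 e3 \<and> set_deg \<F> e2 \<le> 4 \<and> 4 < set_deg \<F> e3)"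
  proof
    assume "\<exists>e1 e2 e3. ordered_pairs \<F> {x, z, w} e1 e2 e3 \<and> set_deg \<F> e2 \<le> 4 \<and> 4 < set_deg \<F> e3"
    then obtain e1 e2 e3 where E: "ordered_pairs \<F> {x, z, w} e1 e2 e3" "set_deg \<F> e2 \<le> 4"
      by blast
    then have "set_deg \<F> e1 \<le> 4"
      unfolding ordered_pairs_def by linarith
    then have "e1 = {x, w}" "e2 = {x, w}"
      using ordered_pairs_triple[OF E(1)] E(2) heavy rest by auto
    then show False
      using E(1) unfolding ordered_pairs_def by simp
  qed
  obtain e2 e3 where E: "ordered_pairs \<F> {x, z, w} {x, w} e2 e3" "4 < set_deg \<F> e2"
  proof (cases "set_deg \<F> {x, z} \<le> set_deg \<F> {z, w}")
    case True
    have "ordered_pairs \<F> {x, z, w} {x, w} {x, z} {z, w}"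
      unfolding ordered_pairs_def using pairs True heavy light by auto
    then show ?thesis
      using that heavy by blast
  next
    case gt: False
    have "ordered_pairs \<F> {x, z, w} {x, w} {z, w} {x, z}"
      unfolding ordered_pairs_def using pairs gt rest light by auto
    then show ?thesis
      using that rest by force
  qed
  have "\<exists>e1 e2 e3. ordered_pairs \<F> {x, z, w} e1 e2 e3 \<and> set_deg \<F> e1 \<le> 4 \<and> 4 < set_deg \<F> e2"
    "\<exists>e1 e2 e3. ordered_pairs \<F> {x, z, w} e1 e2 e3 \<and> set_deg \<F> e1 \<le> 4 \<and> 4 < set_deg \<F> e2 \<and> x \<in> e1"
    using E light by blast+
  then show ?thesis
    unfolding omega_def using card_T uncovered no_heavy_e3 by simp
qed

text \<open>An uncovered triple \<open>{x, z, w}\<close> in which \<open>{x, z}\<close> has degree \<open>> 4\<close> and \<open>{x, w}\<close>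
  degree \<open>\<le> 4\<close> gives \<open>x\<close> the weight \<open>7/20\<close>, whatever the degree of \<open>{z, w}\<close>: if it is \<open>\<le> 4\<close>,
  then \<open>{x, z}\<close> is the unique heavy pair \<open>e\<^sub>3\<close>, otherwise \<open>{x, w}\<close> is the unique light pair \<open>e\<^sub>1\<close>.\<close>
lemma omega_uncovered_mixed:
  assumes "x \<noteq> z" "x \<noteq> w" "z \<noteq> w"
    and uncovered: "\<not> (\<exists>Q \<in> \<F>. card Q = 4 \<and> {x, z, w} \<subseteq> Q)"
    and heavy: "4 < set_deg \<F> {x, z}" and light: "set_deg \<F> {x, w} \<le> 4"
  shows "omega \<F> x {x, z, w} = 7/20"
  using omega_unique_heavy_pair[OF assms] omega_unique_light_pair[OF assms] by fastforce

lemma eps_Q_mini: "mini_weight \<F> x \<Longrightarrow> eps_Q \<F> x Q = -1/15"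
  by (simp add: eps_Q_def)

lemma cQ_le_card_diff:
  assumes "finite Q" "B \<subseteq> Q" "\<forall>y \<in> B. \<not> mini_weight \<F> y"
  shows "cQ \<F> Q \<le> card Q - card B"
proof -
  have "cQ \<F> Q \<le> card (Q - B)"
    unfolding cQ_def using assms by (intro card_mono) auto
  then show ?thesis
    using assms by (simp add: card_Diff_subset finite_subset)
qed

lemma eps_Q_nonmini_bounds:
  assumes "\<not> mini_weight \<F> x" "x \<in> Q" "finite Q" "card Q = 4"
  shows "0 \<le> eps_Q \<F> x Q" "eps_Q \<F> x Q \<le> 1/5"
    and "cQ \<F> Q \<le> 2 \<Longrightarrow> eps_Q \<F> x Q \<le> 1/15"
    and "cQ \<F> Q = 0 \<Longrightarrow> eps_Q \<F> x Q = 0"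
proof -
  have "cQ \<F> Q \<le> 3"
    using cQ_le_card_diff[of Q "{x}"] assms by simp
  then have c: "cQ \<F> Q = 0 \<or> cQ \<F> Q = 1 \<or> cQ \<F> Q = 2 \<or> cQ \<F> Q = 3"
    by auto
  have e: "eps_Q \<F> x Q = real (cQ \<F> Q) / (15 * (4 - real (cQ \<F> Q)))"
    using assms by (simp add: eps_Q_def)
  show "0 \<le> eps_Q \<F> x Q" "eps_Q \<F> x Q \<le> 1/5"
    and "cQ \<F> Q \<le> 2 \<Longrightarrow> eps_Q \<F> x Q \<le> 1/15"
    and "cQ \<F> Q = 0 \<Longrightarrow> eps_Q \<F> x Q = 0"
    using c unfolding e by auto
qed

section \<open>Links in a hereditary family\<close>

context
  fixes V :: "'a set" and \<F> :: "'a set set"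
  assumes finite_V: "finite V" and family_subset: "\<F> \<subseteq> Pow V" and hereditary: "hereditary \<F>"
begin

lemma finite_member: "F \<in> \<F> \<Longrightarrow> finite F"
  using family_subset finite_V finite_subset by blast

lemma finite_family: "finite \<F>"
  using family_subset finite_V by (meson finite_Pow_iff finite_subset)

lemma hereditaryD: "F \<in> \<F> \<Longrightarrow> G \<subseteq> F \<Longrightarrow> G \<in> \<F>"
  using hereditary unfolding hereditary_def by blast

lemma finite_layer: "finite (layer \<F> x k)"
  using finite_family by (simp add: layer_def)

lemma finite_big_layer: "finite (big_layer \<F> x)"
  using finite_family by (simp add: big_layer_def)

lemma finite_nbhd: "finite (nbhd \<F> x)"
  using family_subset finite_V by (auto simp: nbhd_def intro: finite_subset[of _ V])

lemma singleton_mem: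
  assumes "0 < deg \<F> x"
  shows "{x} \<in> \<F>"
proof -
  have "link \<F> x \<noteq> {}"
    using assms by (auto simp: deg_def)
  then obtain F where "F \<in> \<F>" "x \<in> F"
    by (auto simp: link_def)
  then show ?thesis
    using hereditaryD by blast
qed

lemma f_i_eq_card_layer: "f_i \<F> i x = card (layer \<F> x (Suc i))"
proof -
  have "{G \<in> link \<F> x. card G = i} = (\<lambda>F. F - {x}) ` layer \<F> x (Suc i)"
  proof
    show "{G \<in> link \<F> x. card G = i} \<subseteq> (\<lambda>F. F - {x}) ` layer \<F> x (Suc i)"
    proof
      fix G assume "G \<in> {G \<in> link \<F> x. card G = i}"
      then obtain F where F: "F \<in> \<F>" "x \<in> F" "G = F - {x}" "card G = i"
        by (auto simp: link_def)
      then have "card F = Suc i"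
        using finite_member[OF F(1)] card_Suc_Diff1 by fastforce
      then show "G \<in> (\<lambda>F. F - {x}) ` layer \<F> x (Suc i)"
        using F by (auto simp: layer_def)
    qed
    show "(\<lambda>F. F - {x}) ` layer \<F> x (Suc i) \<subseteq> {G \<in> link \<F> x. card G = i}"
      using finite_member by (auto simp: layer_def link_def)
  qed
  moreover have "inj_on (\<lambda>F. F - {x}) (layer \<F> x (Suc i))"
    by (auto simp: inj_on_def layer_def)
  ultimately show ?thesis
    unfolding f_i_def by (simp add: card_image)
qed

lemma star_partition:
  assumes "{x} \<in> \<F>"
  shows "{F \<in> \<F>. x \<in> F} = {{x}} \<union> layer \<F> x 2 \<union> layer \<F> x 3 \<union> layer \<F> x 4 \<union> big_layer \<F> x"
proof
  show "{F \<in> \<F>. x \<in> F} \<subseteq> {{x}} \<union> layer \<F> x 2 \<union> layer \<F> x 3 \<union> layer \<F> x 4 \<union> big_layer \<F> x"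
  proof
    fix F assume F: "F \<in> {F \<in> \<F>. x \<in> F}"
    then have "card F \<noteq> 0"
      using finite_member by auto
    moreover have "card F = 1 \<Longrightarrow> F = {x}"
      using F by (auto simp: card_Suc_eq)
    ultimately show "F \<in> {{x}} \<union> layer \<F> x 2 \<union> layer \<F> x 3 \<union> layer \<F> x 4 \<union> big_layer \<F> x"
      using F by (auto simp: layer_def big_layer_def)
  qed
  show "{{x}} \<union> layer \<F> x 2 \<union> layer \<F> x 3 \<union> layer \<F> x 4 \<union> big_layer \<F> x \<subseteq> {F \<in> \<F>. x \<in> F}"
    using assms by (auto simp: layer_def big_layer_def)
qed

lemma sum_star:
  fixes g :: "'a set \<Rightarrow> 'b::comm_monoid_add"
  assumes "{x} \<in> \<F>"
  shows "(\<Sum>F \<in> {F \<in> \<F>. x \<in> F}. g F) = g {x} + sum g (layer \<F> x 2) + sum g (layer \<F> x 3)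
           + sum g (layer \<F> x 4) + sum g (big_layer \<F> x)"
proof -
  have disjoint: "{{x}} \<inter> layer \<F> x 2 = {}" "({{x}} \<union> layer \<F> x 2) \<inter> layer \<F> x 3 = {}"
    "({{x}} \<union> layer \<F> x 2 \<union> layer \<F> x 3) \<inter> layer \<F> x 4 = {}"
    "({{x}} \<union> layer \<F> x 2 \<union> layer \<F> x 3 \<union> layer \<F> x 4) \<inter> big_layer \<F> x = {}"
    by (auto simp: layer_def big_layer_def)
  show ?thesis
    unfolding star_partition[OF assms] using disjoint finite_layer finite_big_layer
    by (simp add: sum.union_disjoint add.assoc)
qed

lemma deg_eq_sum_layers:
  assumes "{x} \<in> \<F>"
  shows "deg \<F> x = 1 + card (layer \<F> x 2) + card (layer \<F> x 3) + card (layer \<F> x 4) + card (big_layer \<F> x)"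
proof -
  have "link \<F> x = (\<lambda>F. F - {x}) ` {F \<in> \<F>. x \<in> F}"
    by (auto simp: link_def)
  moreover have "inj_on (\<lambda>F. F - {x}) {F \<in> \<F>. x \<in> F}"
    by (auto simp: inj_on_def)
  ultimately have "deg \<F> x = card {F \<in> \<F>. x \<in> F}"
    by (simp add: deg_def card_image)
  then show ?thesis
    using sum_star[OF assms, of "\<lambda>_. 1::nat"] by simp
qed

lemma weight_eq:
  assumes "{x} \<in> \<F>"
  shows "weight \<F> x = 1 + card (layer \<F> x 2) / 2 + triple_weight \<F> x + card (layer \<F> x 4) / 4 + big_weight \<F> x"
proof -
  have "(\<Sum>F \<in> layer \<F> x k. omega \<F> x F) = card (layer \<F> x k) / k" if "k \<noteq> 3" for k
    using that by (simp add: layer_def omega_card_ne_3)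
  then show ?thesis
    unfolding weight_def sum_star[OF assms] triple_weight_def big_weight_def
    by (simp add: omega_card_ne_3)
qed

lemma eps_eq: "eps \<F> x = (\<Sum>Q \<in> layer \<F> x 4. eps_Q \<F> x Q)"
  unfolding eps_def layer_def by (simp add: conj_commute)

lemma weight_minus_eps_eq:
  assumes "{x} \<in> \<F>"
  shows "weight \<F> x - eps \<F> x = 1 + card (layer \<F> x 2) / 2 + triple_weight \<F> x + quad_slack \<F> x + big_weight \<F> x"
  using weight_eq[OF assms] by (simp add: eps_eq quad_slack_def sum_subtractf)

lemma big_weight_nonneg: "0 \<le> big_weight \<F> x"
  unfolding big_weight_def by (rule sum_nonneg) (simp add: big_layer_def omega_card_ne_3)

lemma eps_nonneg: "\<not> mini_weight \<F> x \<Longrightarrow> 0 \<le> eps \<F> x"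
  unfolding eps_eq by (intro sum_nonneg eps_Q_nonmini_bounds(1)) (auto simp: layer_def finite_member)

lemma facets_at_subset_layer3: "Q \<in> layer \<F> x 4 \<Longrightarrow> facets_at x Q \<subseteq> layer \<F> x 3"
  unfolding facets_at_def layer_def using hereditaryD by blast

lemma card_facets_at_layer4: "Q \<in> layer \<F> x 4 \<Longrightarrow> card (facets_at x Q) = 3"
  by (rule card_facets_at) (auto simp: layer_def finite_member)

lemma finite_facets_at_layer4: "Q \<in> layer \<F> x 4 \<Longrightarrow> finite (facets_at x Q)"
  by (rule finite_facets_at) (auto simp: layer_def finite_member)

lemma card_facets_at_Int_layer4:
  "Q1 \<in> layer \<F> x 4 \<Longrightarrow> Q2 \<in> layer \<F> x 4 \<Longrightarrow> Q1 \<noteq> Q2 \<Longrightarrow> card (facets_at x Q1 \<inter> facets_at x Q2) \<le> 1"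
  by (rule card_facets_at_Int_le_1) (auto simp: layer_def finite_member)

lemma card_facets_at_Un_ge_5:
  assumes "Q1 \<in> layer \<F> x 4" "Q2 \<in> layer \<F> x 4" "Q1 \<noteq> Q2"
  shows "5 \<le> card (facets_at x Q1 \<union> facets_at x Q2)"
  using card_Un_Int[OF finite_facets_at_layer4 finite_facets_at_layer4, OF assms(1,2)]
    card_facets_at_Int_layer4[OF assms] card_facets_at_layer4 assms(1,2) by simp

lemma layer3_eq_facets_at_Un:
  assumes "Q1 \<in> layer \<F> x 4" "Q2 \<in> layer \<F> x 4" "Q1 \<noteq> Q2" "card (layer \<F> x 3) \<le> 5"
  shows "layer \<F> x 3 = facets_at x Q1 \<union> facets_at x Q2"
proof -
  have sub: "facets_at x Q1 \<union> facets_at x Q2 \<subseteq> layer \<F> x 3"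
    using facets_at_subset_layer3 assms(1,2) by blast
  have "card (facets_at x Q1 \<union> facets_at x Q2) = card (layer \<F> x 3)"
    using card_mono[OF finite_layer sub] card_facets_at_Un_ge_5[OF assms(1-3)] assms(4) by linarith
  then have "facets_at x Q1 \<union> facets_at x Q2 = layer \<F> x 3"
    by (rule card_subset_eq[OF finite_layer sub])
  then show ?thesis
    by (rule sym)
qed

lemma card_layer3_ge_6:
  assumes "3 \<le> card (layer \<F> x 4)"
  shows "6 \<le> card (layer \<F> x 3)"
proof -
  obtain Q1 Q2 Q3 where Q: "Q1 \<in> layer \<F> x 4" "Q2 \<in> layer \<F> x 4" "Q3 \<in> layer \<F> x 4"
    "Q1 \<noteq> Q2" "Q1 \<noteq> Q3" "Q2 \<noteq> Q3"
    by (rule obtain_three_elems[OF assms])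
  let ?A = "facets_at x Q1 \<union> facets_at x Q2" and ?B = "facets_at x Q3"
  have "?A \<inter> ?B = (facets_at x Q1 \<inter> ?B) \<union> (facets_at x Q2 \<inter> ?B)"
    by blast
  then have "card (?A \<inter> ?B) \<le> card (facets_at x Q1 \<inter> ?B) + card (facets_at x Q2 \<inter> ?B)"
    by (simp add: card_Un_le)
  then have "card (?A \<inter> ?B) \<le> 2"
    using card_facets_at_Int_layer4[OF Q(1,3,5)] card_facets_at_Int_layer4[OF Q(2,3,6)] by linarith
  moreover have "card ?A + card ?B = card (?A \<union> ?B) + card (?A \<inter> ?B)"
    by (rule card_Un_Int) (use finite_facets_at_layer4 Q(1-3) in auto)
  ultimately have "6 \<le> card (?A \<union> ?B)"
    using card_facets_at_Un_ge_5[OF Q(1,2,4)] card_facets_at_layer4[OF Q(3)] by linarith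
  also have "\<dots> \<le> card (layer \<F> x 3)"
    by (rule card_mono[OF finite_layer]) (use facets_at_subset_layer3 Q in blast)
  finally show ?thesis .
qed

lemma card_layer4_ge_4:
  assumes "big_layer \<F> x \<noteq> {}"
  shows "4 \<le> card (layer \<F> x 4)"
proof -
  obtain F where F: "F \<in> \<F>" "x \<in> F" "5 \<le> card F"
    using assms by (auto simp: big_layer_def)
  have "\<exists>G. {x} \<subseteq> G \<and> G \<subseteq> F \<and> card G = 5"
    by (rule exists_subset_between) (use F finite_member in auto)
  then obtain G where G: "{x} \<subseteq> G" "G \<subseteq> F" "card G = 5"
    by blast
  have fin_G: "finite G"
    using G finite_member[OF F(1)] finite_subset by blast
  have "G - {y} \<in> layer \<F> x 4" if "y \<in> G - {x}" for y
  proof -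
    have "G - {y} \<in> \<F>"
      by (rule hereditaryD[OF F(1)]) (use G(2) in blast)
    then show ?thesis
      using that G fin_G by (auto simp: layer_def)
  qed
  then have "(\<lambda>y. G - {y}) ` (G - {x}) \<subseteq> layer \<F> x 4"
    by blast
  then have "card ((\<lambda>y. G - {y}) ` (G - {x})) \<le> card (layer \<F> x 4)"
    by (rule card_mono[OF finite_layer])
  moreover have "card ((\<lambda>y. G - {y}) ` (G - {x})) = 4"
  proof -
    have "inj_on (\<lambda>y. G - {y}) (G - {x})"
      by (auto simp: inj_on_def)
    then show ?thesis
      using G fin_G by (simp add: card_image)
  qed
  ultimately show ?thesis
    by linarith
qed

lemma card_nbhd: "card (nbhd \<F> x) = card (layer \<F> x 2)"
proof -
  have "layer \<F> x 2 = (\<lambda>y. {x, y}) ` nbhd \<F> x"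
  proof
    show "layer \<F> x 2 \<subseteq> (\<lambda>y. {x, y}) ` nbhd \<F> x"
    proof
      fix F assume "F \<in> layer \<F> x 2"
      then have F: "F \<in> \<F>" "x \<in> F" "card F = 2"
        by (auto simp: layer_def)
      then obtain a b where ab: "F = {a, b}" "a \<noteq> b"
        unfolding card_2_iff by blast
      obtain y where "F = {x, y}" "y \<noteq> x"
        using ab F(2) by (cases "a = x") (auto simp: insert_commute)
      then show "F \<in> (\<lambda>y. {x, y}) ` nbhd \<F> x"
        using F(1) by (auto simp: nbhd_def)
    qed
    show "(\<lambda>y. {x, y}) ` nbhd \<F> x \<subseteq> layer \<F> x 2"
      by (auto simp: nbhd_def layer_def)
  qed
  moreover have "inj_on (\<lambda>y. {x, y}) (nbhd \<F> x)"
    by (auto simp: inj_on_def nbhd_def doubleton_eq_iff)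
  ultimately show ?thesis
    by (simp add: card_image)
qed

lemma diff_subset_nbhd:
  assumes "F \<in> \<F>" "x \<in> F"
  shows "F - {x} \<subseteq> nbhd \<F> x"
proof
  fix y assume y: "y \<in> F - {x}"
  then have "{x, y} \<in> \<F>"
    by (intro hereditaryD[OF assms(1)]) (use assms(2) in blast)
  then show "y \<in> nbhd \<F> x"
    using y by (simp add: nbhd_def)
qed

lemma card_layer3_within_le:
  assumes "finite B"
  shows "card {F \<in> layer \<F> x 3. F - {x} \<subseteq> B} \<le> card B choose 2"
proof -
  have "inj_on (\<lambda>F. F - {x}) {F \<in> layer \<F> x 3. F - {x} \<subseteq> B}"
    by (auto simp: inj_on_def layer_def)
  moreover have "(\<lambda>F. F - {x}) ` {F \<in> layer \<F> x 3. F - {x} \<subseteq> B} \<subseteq> {P. P \<subseteq> B \<and> card P = 2}"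
    using finite_member by (auto simp: layer_def)
  moreover have "finite {P. P \<subseteq> B \<and> card P = 2}"
    using assms by simp
  ultimately have "card {F \<in> layer \<F> x 3. F - {x} \<subseteq> B} \<le> card {P. P \<subseteq> B \<and> card P = 2}"
    by (rule card_inj_on_le)
  then show ?thesis
    using n_subsets[OF assms] by simp
qed

lemma card_layer3_le_choose: "card (layer \<F> x 3) \<le> card (layer \<F> x 2) choose 2"
proof -
  have "{F \<in> layer \<F> x 3. F - {x} \<subseteq> nbhd \<F> x} = layer \<F> x 3"
    using diff_subset_nbhd by (auto simp: layer_def)
  then show ?thesis
    using card_layer3_within_le[of "nbhd \<F> x" x, OF finite_nbhd] card_nbhd by simp
qed

text \<open>With \<open>4\<close> neighbours and \<open>6 = 4 choose 2\<close> triples, every pair of neighbours spans a triple.\<close>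
lemma card_layer3_through_ge_3:
  assumes "card (layer \<F> x 2) = 4" "card (layer \<F> x 3) = 6" "a \<in> nbhd \<F> x"
  shows "3 \<le> card {F \<in> layer \<F> x 3. a \<in> F}"
proof -
  have "{F \<in> layer \<F> x 3. a \<notin> F} \<subseteq> {F \<in> layer \<F> x 3. F - {x} \<subseteq> nbhd \<F> x - {a}}"
    using diff_subset_nbhd by (auto simp: layer_def)
  then have "card {F \<in> layer \<F> x 3. a \<notin> F} \<le> card {F \<in> layer \<F> x 3. F - {x} \<subseteq> nbhd \<F> x - {a}}"
    by (rule card_mono[rotated]) (simp add: finite_layer)
  also have "\<dots> \<le> card (nbhd \<F> x - {a}) choose 2"
    by (rule card_layer3_within_le) (simp add: finite_nbhd)
  also have "\<dots> = 3"
    using assms card_nbhd finite_nbhd by (simp add: choose_two)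
  finally have "card {F \<in> layer \<F> x 3. a \<notin> F} \<le> 3" .
  moreover have "card (layer \<F> x 3) = card {F \<in> layer \<F> x 3. a \<in> F} + card {F \<in> layer \<F> x 3. a \<notin> F}"
    using finite_layer by (subst card_Un_disjoint[symmetric]) (auto intro: arg_cong[where f = card])
  ultimately show ?thesis
    using assms by simp
qed

section \<open>Lower bounds for the weight of the triples\<close>

lemma triple_weight_ge:
  assumes C: "C \<subseteq> layer \<F> x 3" "\<forall>F \<in> C. \<exists>Q \<in> \<F>. card Q = 4 \<and> F \<subseteq> Q"
    and D: "D \<subseteq> layer \<F> x 3 - C" "\<forall>F \<in> D. omega \<F> x F = 7/20"
  shows "card C / 3 + 7/20 * card D + 3/10 * (card (layer \<F> x 3) - card C - card D) \<le> triple_weight \<F> x"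
proof -
  let ?S = "layer \<F> x 3" and ?R = "layer \<F> x 3 - (C \<union> D)"
  have sub: "C \<union> D \<subseteq> ?S"
    using C D by blast
  have fin: "finite C" "finite D"
    using sub finite_layer finite_subset by blast+
  have disj: "C \<inter> D = {}"
    using D by blast
  have "(\<Sum>F \<in> C. omega \<F> x F) = (\<Sum>F \<in> C. 1/3)"
  proof (rule sum.cong)
    fix F assume "F \<in> C"
    then obtain Q where Q: "Q \<in> \<F>" "card Q = 4" "F \<subseteq> Q"
      using C(2) by blast
    have "card F = 3"
      using C(1) \<open>F \<in> C\<close> by (auto simp: layer_def)
    then show "omega \<F> x F = 1/3"
      using Q by (rule omega_covered)
  qed simp
  moreover have "(\<Sum>F \<in> D. omega \<F> x F) = (\<Sum>F \<in> D. 7/20)"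
    using D(2) by (intro sum.cong) auto
  moreover have "(\<Sum>F \<in> ?R. 3/10) \<le> (\<Sum>F \<in> ?R. omega \<F> x F)"
    by (rule sum_mono) (use omega_card_3_ge in \<open>auto simp: layer_def\<close>)
  moreover have "triple_weight \<F> x = (\<Sum>F \<in> ?R. omega \<F> x F) + (\<Sum>F \<in> C. omega \<F> x F) + (\<Sum>F \<in> D. omega \<F> x F)"
    unfolding triple_weight_def sum.subset_diff[OF sub finite_layer] sum.union_disjoint[OF fin disj]
    by (simp add: add.assoc)
  moreover have "real (card ?R) = card ?S - card C - card D"
  proof -
    have "card (C \<union> D) = card C + card D"
      using fin disj by (rule card_Un_disjoint)
    moreover have "card (C \<union> D) \<le> card ?S"
      by (rule card_mono[OF finite_layer sub])
    ultimately show ?thesis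
      using card_Diff_subset[OF finite_UnI[OF fin] sub] by simp
  qed
  ultimately show ?thesis
    by simp
qed

lemma triple_weight_ge_covered:
  assumes "C \<subseteq> layer \<F> x 3" "\<forall>F \<in> C. \<exists>Q \<in> \<F>. card Q = 4 \<and> F \<subseteq> Q"
  shows "card C / 3 + 3/10 * (card (layer \<F> x 3) - card C) \<le> triple_weight \<F> x"
  using triple_weight_ge[OF assms, of "{}"] by simp

lemma triple_weight_ge_card: "3/10 * card (layer \<F> x 3) \<le> triple_weight \<F> x"
  using triple_weight_ge_covered[of "{}"] by simp

lemma covered_facets_at: "Q \<in> layer \<F> x 4 \<Longrightarrow> \<forall>F \<in> facets_at x Q. \<exists>Q' \<in> \<F>. card Q' = 4 \<and> F \<subseteq> Q'"
  by (auto simp: facets_at_def layer_def)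

lemma triple_weight_ge_one_quad:
  assumes "layer \<F> x 4 \<noteq> {}"
  shows "3/10 * card (layer \<F> x 3) + 1/10 \<le> triple_weight \<F> x"
proof -
  obtain Q where Q: "Q \<in> layer \<F> x 4"
    using assms by blast
  show ?thesis
    using triple_weight_ge_covered[OF facets_at_subset_layer3 covered_facets_at, OF Q Q]
      card_facets_at_layer4[OF Q] by simp
qed

lemma triple_weight_ge_two_quads:
  assumes "2 \<le> card (layer \<F> x 4)"
  shows "5 \<le> card (layer \<F> x 3) \<and> 3/10 * card (layer \<F> x 3) + 1/6 \<le> triple_weight \<F> x"
proof -
  obtain Q1 Q2 where Q: "Q1 \<in> layer \<F> x 4" "Q2 \<in> layer \<F> x 4" "Q1 \<noteq> Q2"
    by (rule obtain_two_elems[OF assms])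
  let ?C = "facets_at x Q1 \<union> facets_at x Q2"
  have sub: "?C \<subseteq> layer \<F> x 3"
    using facets_at_subset_layer3 Q by blast
  have "5 \<le> card ?C"
    by (rule card_facets_at_Un_ge_5[OF Q])
  moreover have "card ?C \<le> card (layer \<F> x 3)"
    by (rule card_mono[OF finite_layer sub])
  moreover have "card ?C / 3 + 3/10 * (card (layer \<F> x 3) - card ?C) \<le> triple_weight \<F> x"
    by (rule triple_weight_ge_covered[OF sub]) (use covered_facets_at Q in blast)
  moreover have "5 \<le> real (card ?C)"
    using \<open>5 \<le> card ?C\<close> by simp
  ultimately show ?thesis
    by linarith
qed

lemma set_deg_pair_le:
  assumes "x \<noteq> w" "\<forall>Q \<in> layer \<F> x 4. w \<notin> Q"
  shows "set_deg \<F> {x, w} \<le> 1 + card {F \<in> layer \<F> x 3. w \<in> F}"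
proof -
  have "{F \<in> \<F>. {x, w} \<subseteq> F} \<subseteq> insert {x, w} {F \<in> layer \<F> x 3. w \<in> F}"
  proof
    fix F assume "F \<in> {F \<in> \<F>. {x, w} \<subseteq> F}"
    then have F: "F \<in> \<F>" "{x, w} \<subseteq> F" and fin: "finite F"
      using finite_member by auto
    have "card {x, w} \<le> card F"
      by (rule card_mono[OF fin F(2)])
    then have "2 \<le> card F"
      using assms(1) by simp
    moreover have "\<not> 4 \<le> card F"
    proof
      assume "4 \<le> card F"
      then have "\<exists>G. {x, w} \<subseteq> G \<and> G \<subseteq> F \<and> card G = 4"
        by (intro exists_subset_between) (use assms(1) fin F(2) in auto)
      then obtain G where G: "{x, w} \<subseteq> G" "G \<subseteq> F" "card G = 4"
        by blast
      have "G \<in> \<F>"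
        by (rule hereditaryD[OF F(1) G(2)])
      then have "G \<in> layer \<F> x 4"
        using G by (simp add: layer_def)
      then show False
        using assms(2) G(1) by blast
    qed
    moreover have "F = {x, w}" if "card F = 2"
      using card_subset_eq[OF fin F(2)] assms(1) that by simp
    ultimately show "F \<in> insert {x, w} {F \<in> layer \<F> x 3. w \<in> F}"
      using F by (auto simp: layer_def)
  qed
  then have "set_deg \<F> {x, w} \<le> card (insert {x, w} {F \<in> layer \<F> x 3. w \<in> F})"
    unfolding set_deg_def by (rule card_mono[rotated]) (simp add: finite_layer)
  also have "\<dots> \<le> 1 + card {F \<in> layer \<F> x 3. w \<in> F}"
    using finite_layer by (simp add: card_insert_if)
  finally show ?thesis .
qed

lemma set_deg_pair_ge:
  assumes "x \<noteq> a" "{x, a} \<in> \<F>"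
  shows "1 + card {F \<in> layer \<F> x 3. a \<in> F} + card {Q \<in> layer \<F> x 4. a \<in> Q} \<le> set_deg \<F> {x, a}"
proof -
  let ?A = "{F \<in> layer \<F> x 3. a \<in> F}" and ?B = "{Q \<in> layer \<F> x 4. a \<in> Q}"
  have "{x, a} \<notin> ?A \<union> ?B" "?A \<inter> ?B = {}"
    using assms by (auto simp: layer_def)
  then have "card (insert {x, a} (?A \<union> ?B)) = 1 + card ?A + card ?B"
    using finite_layer by (simp add: card_Un_disjoint)
  moreover have "insert {x, a} (?A \<union> ?B) \<subseteq> {F \<in> \<F>. {x, a} \<subseteq> F}"
    using assms by (auto simp: layer_def)
  then have "card (insert {x, a} (?A \<union> ?B)) \<le> set_deg \<F> {x, a}"
    unfolding set_deg_def by (rule card_mono[rotated]) (simp add: finite_family)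
  ultimately show ?thesis
    by simp
qed

lemma slack_ge:
  assumes "\<not> mini_weight \<F> x" "Q \<in> layer \<F> x 4"
  shows "1/20 \<le> 1/4 - eps_Q \<F> x Q"
proof -
  have Q: "x \<in> Q" "finite Q" "card Q = 4"
    using assms(2) finite_member by (auto simp: layer_def)
  show ?thesis
    using eps_Q_nonmini_bounds(2)[OF assms(1) Q] by simp
qed

text \<open>A non-mini-weight vertex \<open>a \<noteq> x\<close> in \<open>Q\<close> leaves at most two mini-weight vertices in \<open>Q\<close>.\<close>
lemma slack_ge_of_nonmini:
  assumes "\<not> mini_weight \<F> x" "Q \<in> layer \<F> x 4" "a \<in> Q" "a \<noteq> x" "\<not> mini_weight \<F> a"
  shows "11/60 \<le> 1/4 - eps_Q \<F> x Q"
proof -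
  have Q: "x \<in> Q" "finite Q" "card Q = 4"
    using assms(2) finite_member by (auto simp: layer_def)
  have "cQ \<F> Q \<le> card Q - card {x, a}"
    by (rule cQ_le_card_diff) (use Q assms in auto)
  then have "cQ \<F> Q \<le> 2"
    using Q assms(4) by simp
  then show ?thesis
    using eps_Q_nonmini_bounds(3)[OF assms(1) Q] by simp
qed

lemma quad_slack_ge_subset:
  assumes "\<not> mini_weight \<F> x" "K \<subseteq> layer \<F> x 4"
  shows "(\<Sum>Q \<in> K. 1/4 - eps_Q \<F> x Q) \<le> quad_slack \<F> x"
  unfolding quad_slack_def
  by (rule sum_mono2[OF finite_layer assms(2)]) (use slack_ge[OF assms(1)] in force)

lemma quad_slack_ge_card:
  assumes "\<not> mini_weight \<F> x"
  shows "card (layer \<F> x 4) / 20 \<le> quad_slack \<F> x"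
proof -
  have "(\<Sum>Q \<in> layer \<F> x 4. 1/20) \<le> quad_slack \<F> x"
    unfolding quad_slack_def by (rule sum_mono) (rule slack_ge[OF assms])
  then show ?thesis
    by simp
qed

section \<open>Mini-weight vertices\<close>

lemma mini_weight_layer_cards:
  assumes "mini_weight \<F> a"
  shows "card (layer \<F> a 2) = 4" "card (layer \<F> a 3) = 5" "card (layer \<F> a 4) = 2"
  using assms f_i_eq_card_layer[of 1 a] f_i_eq_card_layer[of 2 a] f_i_eq_card_layer[of 3 a]
  by (simp_all add: mini_weight_def numeral_eq_Suc)

lemma mini_weight_values:
  assumes "mini_weight \<F> x"
  shows "weight \<F> x = 31/6" "eps \<F> x = -2/15"
proof -
  note cards = mini_weight_layer_cards[OF assms]
  obtain Q1 Q2 where Q: "layer \<F> x 4 = {Q1, Q2}" "Q1 \<noteq> Q2"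
    using cards(3) unfolding card_2_iff by blast
  then have Q_in: "Q1 \<in> layer \<F> x 4" "Q2 \<in> layer \<F> x 4"
    by auto
  have "{x} \<in> \<F>"
    by (rule hereditaryD[of Q1]) (use Q_in(1) in \<open>auto simp: layer_def\<close>)
  have "\<not> 4 \<le> card (layer \<F> x 4)"
    using cards(3) by simp
  then have "big_layer \<F> x = {}"
    using card_layer4_ge_4 by blast
  then have "big_weight \<F> x = 0"
    by (simp add: big_weight_def)
  have layer3: "layer \<F> x 3 = facets_at x Q1 \<union> facets_at x Q2"
    using layer3_eq_facets_at_Un[OF Q_in Q(2)] cards(2) by simp
  have "triple_weight \<F> x = (\<Sum>F \<in> layer \<F> x 3. 1/3)"
    unfolding triple_weight_def
  proof (rule sum.cong)
    fix F assume F: "F \<in> layer \<F> x 3"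
    then have "F \<in> facets_at x Q1 \<or> F \<in> facets_at x Q2"
      unfolding layer3 by blast
    then obtain Q where "Q \<in> layer \<F> x 4" "F \<subseteq> Q"
      using Q_in by (auto simp: facets_at_def)
    then have Q: "Q \<in> \<F>" "card Q = 4" "F \<subseteq> Q"
      by (auto simp: layer_def)
    have "card F = 3"
      using F by (simp add: layer_def)
    then show "omega \<F> x F = 1/3"
      using Q by (rule omega_covered)
  qed simp
  then show "weight \<F> x = 31/6"
    using weight_eq[OF \<open>{x} \<in> \<F>\<close>] cards \<open>big_weight \<F> x = 0\<close> by simp
  show "eps \<F> x = -2/15"
    using cards(3) by (simp add: eps_eq eps_Q_mini[OF assms])
qed

lemma card_quads_through_mini_weight_le_2:
  assumes "mini_weight \<F> a"
  shows "card {Q \<in> layer \<F> x 4. a \<in> Q} \<le> 2"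
proof -
  have "{Q \<in> layer \<F> x 4. a \<in> Q} \<subseteq> layer \<F> a 4"
    by (auto simp: layer_def)
  then have "card {Q \<in> layer \<F> x 4. a \<in> Q} \<le> card (layer \<F> a 4)"
    by (rule card_mono[OF finite_layer])
  then show ?thesis
    using mini_weight_layer_cards(3)[OF assms] by simp
qed

text \<open>The \<open>5\<close> vertices of the star of a mini-weight vertex \<open>a\<close> contain both its quadruples, so
  they share three vertices. If only one of them, \<open>Q1\<close>, also contains \<open>x\<close>, the other, \<open>R\<close>,
  contains \<open>Q1 - {x}\<close>.\<close>
lemma mini_weight_other_quad:
  assumes mini: "mini_weight \<F> a"
    and one: "{Q \<in> layer \<F> x 4. a \<in> Q} = {Q1}"
  obtains R where "R \<in> layer \<F> a 4" "R \<noteq> Q1" "x \<notin> R"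
    "layer \<F> a 3 = facets_at a Q1 \<union> facets_at a R" "Q1 - {x} \<subseteq> R"
proof -
  note cards = mini_weight_layer_cards[OF mini]
  have Q1: "Q1 \<in> layer \<F> x 4" "a \<in> Q1"
    using one by auto
  then have Q1_a: "Q1 \<in> layer \<F> a 4"
    by (auto simp: layer_def)
  obtain P1 P2 where "layer \<F> a 4 = {P1, P2}" "P1 \<noteq> P2"
    using cards(3) unfolding card_2_iff by blast
  then obtain R where R: "R \<in> layer \<F> a 4" "R \<noteq> Q1"
    using Q1_a by blast
  have "x \<notin> R"
  proof
    assume "x \<in> R"
    then have "R \<in> {Q \<in> layer \<F> x 4. a \<in> Q}"
      using R by (auto simp: layer_def)
    then show False
      using one R by auto
  qed
  have layer3: "layer \<F> a 3 = facets_at a Q1 \<union> facets_at a R"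
    using layer3_eq_facets_at_Un[OF Q1_a R(1) R(2)[symmetric]] cards(2) by simp
  have fin: "finite Q1" "finite R" and card4: "card Q1 = 4" "card R = 4"
    using Q1_a R finite_member by (auto simp: layer_def)
  have "Q1 \<union> R \<subseteq> insert a (nbhd \<F> a)"
    using diff_subset_nbhd Q1_a R by (auto simp: layer_def)
  then have "card (Q1 \<union> R) \<le> card (insert a (nbhd \<F> a))"
    by (rule card_mono[rotated]) (simp add: finite_nbhd)
  moreover have "card (insert a (nbhd \<F> a)) \<le> 5"
    using finite_nbhd card_nbhd[of a] cards(1) by (simp add: card_insert_if)
  ultimately have "card (Q1 \<union> R) \<le> 5"
    by linarith
  then have "3 \<le> card (Q1 \<inter> R)"
    using card_Un_Int[OF fin] card4 by linarith
  moreover have sub: "Q1 \<inter> R \<subseteq> Q1 - {x}"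
    using \<open>x \<notin> R\<close> by blast
  moreover have "card (Q1 - {x}) = 3"
    using card4 fin Q1 by (simp add: layer_def)
  ultimately have "Q1 \<inter> R = Q1 - {x}"
    using card_subset_eq[OF _ sub] card_mono[OF _ sub] fin by simp
  then have "Q1 - {x} \<subseteq> R"
    by blast
  then show ?thesis
    using that R \<open>x \<notin> R\<close> layer3 by blast
qed

lemma triples_through_mini_weight_subset:
  assumes "mini_weight \<F> a" "{Q \<in> layer \<F> x 4. a \<in> Q} = {Q1}" "F \<in> layer \<F> x 3" "a \<in> F"
  shows "F \<in> facets_at a Q1"
proof -
  obtain R where R: "layer \<F> a 3 = facets_at a Q1 \<union> facets_at a R" "x \<notin> R"
    using mini_weight_other_quad[OF assms(1,2)] by metis
  have "F \<in> layer \<F> a 3"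
    using assms(3,4) by (auto simp: layer_def)
  moreover have "F \<notin> facets_at a R"
    using assms(3) R(2) by (auto simp: facets_at_def layer_def)
  ultimately show ?thesis
    using R(1) by blast
qed

lemma card_triples_through_mini_weight_le_2:
  assumes "mini_weight \<F> a" "a \<noteq> x" "{Q \<in> layer \<F> x 4. a \<in> Q} = {Q1}"
  shows "card {F \<in> layer \<F> x 3. a \<in> F} \<le> 2"
proof -
  have Q1: "Q1 \<in> layer \<F> x 4" "a \<in> Q1"
    using assms(3) by auto
  then have fin: "finite Q1" "card Q1 = 4"
    using finite_member by (auto simp: layer_def)
  have "{F \<in> layer \<F> x 3. a \<in> F} \<subseteq> (\<lambda>y. Q1 - {y}) ` (Q1 - {a, x})"
  proof
    fix F assume F: "F \<in> {F \<in> layer \<F> x 3. a \<in> F}"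
    then have "F \<in> facets_at a Q1"
      using triples_through_mini_weight_subset[OF assms(1,3)] by blast
    then obtain y where y: "y \<in> Q1 - {a}" "F = Q1 - {y}"
      using facets_at_eq[OF fin Q1(2)] by blast
    moreover have "y \<noteq> x"
      using F y by (auto simp: layer_def)
    ultimately show "F \<in> (\<lambda>y. Q1 - {y}) ` (Q1 - {a, x})"
      by blast
  qed
  then have "card {F \<in> layer \<F> x 3. a \<in> F} \<le> card ((\<lambda>y. Q1 - {y}) ` (Q1 - {a, x}))"
    using fin by (intro card_mono) auto
  also have "\<dots> \<le> card (Q1 - {a, x})"
    using card_image_le fin by blast
  also have "\<dots> = 2"
    using fin Q1 assms(2) by (simp add: layer_def card_Diff_subset)
  finally show ?thesis .
qed

section \<open>The tight profiles\<close>

text \<open>Digits in the lemma names give the profile \<open>(f\<^sub>1(x), f\<^sub>2(x), f\<^sub>3(x))\<close> treated.\<close>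

lemma quad_slack_ge_three_quads:
  assumes nonmini: "\<not> mini_weight \<F> x" and n: "card (layer \<F> x 2) = 4" and t: "3 \<le> card (layer \<F> x 4)"
  shows "33/60 \<le> quad_slack \<F> x"
proof -
  obtain Q1 Q2 Q3 where Q: "Q1 \<in> layer \<F> x 4" "Q2 \<in> layer \<F> x 4" "Q3 \<in> layer \<F> x 4"
    "Q1 \<noteq> Q2" "Q1 \<noteq> Q3" "Q2 \<noteq> Q3"
    using obtain_three_elems[OF t] by blast
  have "(Q1 - {x}) \<inter> (Q2 - {x}) \<inter> (Q3 - {x}) \<noteq> {}"
  proof (rule three_subsets_of_card_3_meet[OF finite_nbhd])
    show "card (nbhd \<F> x) = 4"
      using n card_nbhd by simp
    show "Q1 - {x} \<subseteq> nbhd \<F> x" "Q2 - {x} \<subseteq> nbhd \<F> x" "Q3 - {x} \<subseteq> nbhd \<F> x"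
      using diff_subset_nbhd Q(1-3) by (auto simp: layer_def)
    show "card (Q1 - {x}) = 3" "card (Q2 - {x}) = 3" "card (Q3 - {x}) = 3"
      using Q(1-3) finite_member by (auto simp: layer_def)
  qed
  then obtain a where a: "a \<in> Q1" "a \<in> Q2" "a \<in> Q3" "a \<noteq> x"
    by blast
  have "\<not> mini_weight \<F> a"
  proof
    assume "mini_weight \<F> a"
    then have "card {Q \<in> layer \<F> x 4. a \<in> Q} \<le> 2"
      by (rule card_quads_through_mini_weight_le_2)
    moreover have "card {Q1, Q2, Q3} \<le> card {Q \<in> layer \<F> x 4. a \<in> Q}"
      using Q a by (intro card_mono) (simp_all add: finite_layer)
    ultimately show False
      using Q by simp
  qed
  then have "11/60 \<le> 1/4 - eps_Q \<F> x Q1" "11/60 \<le> 1/4 - eps_Q \<F> x Q2" "11/60 \<le> 1/4 - eps_Q \<F> x Q3"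
    using slack_ge_of_nonmini[OF nonmini] Q(1-3) a by blast+
  moreover have "(\<Sum>Q \<in> {Q1, Q2, Q3}. 1/4 - eps_Q \<F> x Q) \<le> quad_slack \<F> x"
    using Q(1-3) by (intro quad_slack_ge_subset[OF nonmini]) auto
  ultimately show ?thesis
    using Q(4-6) by simp
qed

lemma nonmini_of_profile_46:
  assumes n: "card (layer \<F> x 2) = 4" and m: "card (layer \<F> x 3) = 6"
    and a: "{Q \<in> layer \<F> x 4. a \<in> Q} = {Qa}" "a \<noteq> x"
  shows "\<not> mini_weight \<F> a"
proof
  assume mini: "mini_weight \<F> a"
  have "card {F \<in> layer \<F> x 3. a \<in> F} \<le> 2"
    by (rule card_triples_through_mini_weight_le_2[OF mini a(2,1)])
  moreover have "Qa \<in> layer \<F> x 4" "a \<in> Qa"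
    using a(1) by auto
  then have "a \<in> nbhd \<F> x"
    using diff_subset_nbhd a(2) by (auto simp: layer_def)
  then have "3 \<le> card {F \<in> layer \<F> x 3. a \<in> F}"
    by (rule card_layer3_through_ge_3[OF n m])
  ultimately show False
    by simp
qed

lemma quad_slack_ge_462:
  assumes nonmini: "\<not> mini_weight \<F> x" and n: "card (layer \<F> x 2) = 4" and m: "card (layer \<F> x 3) = 6"
    and t: "card (layer \<F> x 4) = 2"
  shows "22/60 \<le> quad_slack \<F> x"
proof -
  obtain Q1 Q2 where Q: "layer \<F> x 4 = {Q1, Q2}" "Q1 \<noteq> Q2"
    using t unfolding card_2_iff by blast
  have Q_in: "Q1 \<in> layer \<F> x 4" "Q2 \<in> layer \<F> x 4"
    using Q(1) by auto
  then have fin: "finite Q1" "finite Q2" and card4: "card Q1 = card Q2" and x: "x \<in> Q1" "x \<in> Q2"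
    using finite_member by (auto simp: layer_def)
  obtain a1 where a1: "a1 \<in> Q1" "a1 \<notin> Q2" "a1 \<noteq> x"
    using obtain_diff_elem[OF fin(2) card4 Q(2) x(2)] by blast
  obtain a2 where a2: "a2 \<in> Q2" "a2 \<notin> Q1" "a2 \<noteq> x"
    using obtain_diff_elem[OF fin(1) card4[symmetric] Q(2)[symmetric] x(1)] by blast
  have "{Q \<in> layer \<F> x 4. a1 \<in> Q} = {Q1}" "{Q \<in> layer \<F> x 4. a2 \<in> Q} = {Q2}"
    using Q(1) a1 a2 by auto
  then have "11/60 \<le> 1/4 - eps_Q \<F> x Q1" "11/60 \<le> 1/4 - eps_Q \<F> x Q2"
    using slack_ge_of_nonmini[OF nonmini Q_in(1) a1(1,3)] slack_ge_of_nonmini[OF nonmini Q_in(2) a2(1,3)]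
      nonmini_of_profile_46[OF n m] a1(3) a2(3) by blast+
  then show ?thesis
    unfolding quad_slack_def Q(1) using Q(2) by simp
qed

text \<open>Since \<open>Q\<close> is the only quadruple through \<open>x\<close>, the triple is uncovered, \<open>a\<close> lies in exactly
  one quadruple through \<open>x\<close> and \<open>d\<close> in none, so the degrees of \<open>{x, a}\<close> and \<open>{x, d}\<close> are read off
  from the triples through \<open>a\<close> and \<open>d\<close>.\<close>
lemma omega_eq_7_20_single_quad:
  assumes Q: "layer \<F> x 4 = {Q}" and a: "a \<in> Q" "a \<noteq> x" and d: "d \<notin> Q"
    and through_a: "3 \<le> card {F \<in> layer \<F> x 3. a \<in> F}"
    and through_d: "card {F \<in> layer \<F> x 3. d \<in> F} \<le> 3"
  shows "omega \<F> x {x, a, d} = 7/20"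
proof -
  have "Q \<in> layer \<F> x 4"
    using Q by simp
  then have Q_in: "Q \<in> \<F>" "x \<in> Q"
    by (simp_all add: layer_def)
  have uncovered: "\<not> (\<exists>Q' \<in> \<F>. card Q' = 4 \<and> {x, a, d} \<subseteq> Q')"
  proof
    assume "\<exists>Q' \<in> \<F>. card Q' = 4 \<and> {x, a, d} \<subseteq> Q'"
    then obtain Q' where "Q' \<in> layer \<F> x 4" "d \<in> Q'"
      by (auto simp: layer_def)
    then show False
      using Q d by simp
  qed
  have "{x, a} \<in> \<F>"
    by (rule hereditaryD[OF Q_in(1)]) (use Q_in(2) a(1) in blast)
  then have "1 + card {F \<in> layer \<F> x 3. a \<in> F} + card {Q' \<in> layer \<F> x 4. a \<in> Q'} \<le> set_deg \<F> {x, a}"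
    using a(2) by (intro set_deg_pair_ge) auto
  moreover have "{Q' \<in> layer \<F> x 4. a \<in> Q'} = {Q}"
    using Q a(1) by auto
  ultimately have heavy: "4 < set_deg \<F> {x, a}"
    using through_a by simp
  have "set_deg \<F> {x, d} \<le> 1 + card {F \<in> layer \<F> x 3. d \<in> F}"
    using Q Q_in(2) d by (intro set_deg_pair_le) auto
  then have light: "set_deg \<F> {x, d} \<le> 4"
    using through_d by simp
  show ?thesis
    using omega_uncovered_mixed[OF _ _ _ uncovered heavy light] a Q_in(2) d by auto
qed

lemma card_facets_at_through:
  assumes "Q \<in> layer \<F> x 4" "v \<in> Q" "v \<noteq> x"
  shows "card {F \<in> facets_at x Q. v \<in> F} = 2"
proof -
  have Q: "finite Q" "card Q = 4" "x \<in> Q"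
    using assms(1) finite_member by (auto simp: layer_def)
  have "{F \<in> facets_at x Q. v \<in> F} = (\<lambda>y. Q - {y}) ` (Q - {x, v})"
    unfolding facets_at_eq[OF Q] using assms(2) by auto
  moreover have "inj_on (\<lambda>y. Q - {y}) (Q - {x, v})"
    by (auto simp: inj_on_def)
  ultimately show ?thesis
    using Q assms(2,3) by (simp add: card_image card_Diff_subset)
qed

lemma card_layer3_outside_quad:
  assumes "Q \<in> layer \<F> x 4"
  shows "card (layer \<F> x 3 - facets_at x Q) = card (layer \<F> x 3) - 3"
  using facets_at_subset_layer3[OF assms] card_facets_at_layer4[OF assms] finite_facets_at_layer4[OF assms]
  by (simp add: card_Diff_subset)

lemma triple_outside_quad_eq:
  assumes Q: "Q \<in> layer \<F> x 4" and d: "nbhd \<F> x - (Q - {x}) = {d}"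
    and F: "F \<in> layer \<F> x 3 - facets_at x Q"
  obtains a where "a \<in> Q" "a \<noteq> x" "F = {x, a, d}"
proof -
  have F_in: "F \<in> \<F>" "x \<in> F" "card F = 3" and "F \<notin> facets_at x Q"
    using F by (auto simp: layer_def)
  then have not_sub: "\<not> F \<subseteq> Q"
    by (auto simp: facets_at_def)
  have F_nbhd: "F - {x} \<subseteq> nbhd \<F> x"
    by (rule diff_subset_nbhd[OF F_in(1,2)])
  have x: "x \<in> Q"
    using Q by (simp add: layer_def)
  have "d \<in> nbhd \<F> x"
    using d by blast
  then have "d \<noteq> x"
    by (simp add: nbhd_def)
  obtain y where "y \<in> F" "y \<notin> Q"
    using not_sub by blast
  then have "y \<in> nbhd \<F> x - (Q - {x})"
    using F_nbhd x by blast
  then have "d \<in> F"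
    using d \<open>y \<in> F\<close> by simp
  then have "card (F - {x} - {d}) = 1"
    using F_in finite_member \<open>d \<noteq> x\<close> by simp
  then obtain a where a: "F - {x} - {d} = {a}"
    by (rule card_1_singletonE)
  then have "F = {x, a, d}"
    using F_in(2) \<open>d \<in> F\<close> by auto
  moreover have "a \<in> nbhd \<F> x" "a \<noteq> d" "a \<noteq> x"
    using a F_nbhd by auto
  then have "a \<in> Q"
    using d by blast
  ultimately show ?thesis
    using that \<open>a \<noteq> x\<close> by blast
qed

lemma eps_eq_0_461:
  assumes nonmini: "\<not> mini_weight \<F> x" and n: "card (layer \<F> x 2) = 4" and m: "card (layer \<F> x 3) = 6"
    and t: "card (layer \<F> x 4) = 1"
  shows "eps \<F> x = 0"
proof -
  obtain Q where Q: "layer \<F> x 4 = {Q}"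
    by (rule card_1_singletonE[OF t])
  have "Q \<in> layer \<F> x 4"
    using Q by simp
  then have fin: "finite Q" and "x \<in> Q" "card Q = 4"
    using finite_member by (auto simp: layer_def)
  have "\<not> mini_weight \<F> a" if "a \<in> Q" for a
  proof (cases "a = x")
    case False
    have "{Q' \<in> layer \<F> x 4. a \<in> Q'} = {Q}"
      using Q that by auto
    then show ?thesis
      using nonmini_of_profile_46[OF n m] False by blast
  qed (use nonmini in simp)
  then have "cQ \<F> Q \<le> card Q - card Q"
    by (intro cQ_le_card_diff[OF fin]) auto
  then have "eps_Q \<F> x Q = 0"
    using eps_Q_nonmini_bounds(4)[OF nonmini \<open>x \<in> Q\<close> fin \<open>card Q = 4\<close>] by simp
  then show ?thesis
    unfolding eps_eq Q by simp
qed

text \<open>The three triples outside the quadruple \<open>Q\<close> all contain the fourth neighbour \<open>d\<close> of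
  \<open>x\<close>, which therefore lies in at most three triples, while each vertex of \<open>Q - {x}\<close> lies in
  at least three.\<close>
lemma triple_weight_ge_461:
  assumes n: "card (layer \<F> x 2) = 4" and m: "card (layer \<F> x 3) = 6" and t: "card (layer \<F> x 4) = 1"
  shows "41/20 \<le> triple_weight \<F> x"
proof -
  obtain Q where Q: "layer \<F> x 4 = {Q}"
    by (rule card_1_singletonE[OF t])
  have Q_in: "Q \<in> layer \<F> x 4"
    using Q by simp
  then have fin: "finite Q" and card_Q: "card Q = 4" and x: "x \<in> Q" and "Q \<in> \<F>"
    using finite_member by (auto simp: layer_def)
  have sub_nbhd: "Q - {x} \<subseteq> nbhd \<F> x"
    using diff_subset_nbhd \<open>Q \<in> \<F>\<close> x by blast
  have through_Q: "3 \<le> card {F \<in> layer \<F> x 3. a \<in> F}" if "a \<in> Q" "a \<noteq> x" for a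
    using card_layer3_through_ge_3[OF n m] sub_nbhd that by blast
  have "card (nbhd \<F> x - (Q - {x})) = 1"
    using n card_nbhd[of x] sub_nbhd fin card_Q x finite_nbhd by (simp add: card_Diff_subset)
  then obtain d where d: "nbhd \<F> x - (Q - {x}) = {d}"
    using card_1_singletonE by blast
  then have d_notin: "d \<notin> Q"
    by (auto simp: nbhd_def)
  let ?D = "layer \<F> x 3 - facets_at x Q"
  have card_D: "card ?D = 3"
    using card_layer3_outside_quad[OF Q_in] m by simp
  have "{F \<in> layer \<F> x 3. d \<in> F} \<subseteq> ?D"
    using d_notin by (auto simp: facets_at_def)
  then have "card {F \<in> layer \<F> x 3. d \<in> F} \<le> card ?D"
    by (rule card_mono[rotated]) (simp add: finite_layer)
  then have through_d: "card {F \<in> layer \<F> x 3. d \<in> F} \<le> 3"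
    using card_D by simp
  have D_weight: "\<forall>F \<in> ?D. omega \<F> x F = 7/20"
  proof
    fix F assume "F \<in> ?D"
    then obtain a where "a \<in> Q" "a \<noteq> x" "F = {x, a, d}"
      by (rule triple_outside_quad_eq[OF Q_in d])
    then show "omega \<F> x F = 7/20"
      using omega_eq_7_20_single_quad[OF Q _ _ d_notin through_Q through_d] by simp
  qed
  have "card (facets_at x Q) / 3 + 7/20 * card ?D + 3/10 * (card (layer \<F> x 3) - card (facets_at x Q) - card ?D)
    \<le> triple_weight \<F> x"
    by (rule triple_weight_ge[OF facets_at_subset_layer3 covered_facets_at _ D_weight]) (use Q_in in auto)
  then show ?thesis
    using card_facets_at_layer4[OF Q_in] card_D m by simp
qed

text \<open>With five neighbours and two triples outside the quadruple \<open>Q\<close>, one of them meets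
  \<open>Q - {x}\<close>: otherwise both would consist of \<open>x\<close> and the two neighbours outside \<open>Q\<close>.\<close>
lemma triple_outside_quad_meets_quad:
  assumes n: "card (layer \<F> x 2) = 5" and m: "card (layer \<F> x 3) = 5" and Q: "Q \<in> layer \<F> x 4"
  shows "\<exists>U \<in> layer \<F> x 3 - facets_at x Q. \<exists>v \<in> U. v \<in> Q \<and> v \<noteq> x"
proof (rule ccontr)
  assume none: "\<not> (\<exists>U \<in> layer \<F> x 3 - facets_at x Q. \<exists>v \<in> U. v \<in> Q \<and> v \<noteq> x)"
  have fin: "finite Q" and card_Q: "card Q = 4" and x: "x \<in> Q" and "Q \<in> \<F>"
    using Q finite_member by (auto simp: layer_def)
  have sub_nbhd: "Q - {x} \<subseteq> nbhd \<F> x"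
    using diff_subset_nbhd \<open>Q \<in> \<F>\<close> x by blast
  let ?W = "nbhd \<F> x - (Q - {x})"
  have card_W: "card ?W = 2"
    using n card_nbhd[of x] sub_nbhd fin card_Q x finite_nbhd by (simp add: card_Diff_subset)
  have "U = insert x ?W" if U: "U \<in> layer \<F> x 3 - facets_at x Q" for U
  proof -
    have U_in: "U \<in> \<F>" "x \<in> U" "card U = 3"
      using U by (auto simp: layer_def)
    have "U - {x} \<subseteq> ?W"
      using diff_subset_nbhd[OF U_in(1,2)] none U by blast
    moreover have "card (U - {x}) = 2"
      using U_in finite_member by simp
    ultimately have "U - {x} = ?W"
      using card_W card_subset_eq[of ?W "U - {x}"] finite_nbhd by simp
    then show ?thesis
      using U_in(2) by auto
  qed
  then have "card (layer \<F> x 3 - facets_at x Q) \<le> card {insert x ?W}"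
    by (intro card_mono) auto
  then show False
    using card_layer3_outside_quad[OF Q] m by simp
qed

lemma card_triples_through_ge_3:
  assumes Q: "Q \<in> layer \<F> x 4" and U: "U \<in> layer \<F> x 3 - facets_at x Q" "v \<in> U" "v \<in> Q" "v \<noteq> x"
  shows "3 \<le> card {F \<in> layer \<F> x 3. v \<in> F}"
proof -
  let ?I = "{F \<in> facets_at x Q. v \<in> F}"
  have "insert U ?I \<subseteq> {F \<in> layer \<F> x 3. v \<in> F}"
    using facets_at_subset_layer3[OF Q] U(1,2) by blast
  then have "card (insert U ?I) \<le> card {F \<in> layer \<F> x 3. v \<in> F}"
    by (rule card_mono[rotated]) (simp add: finite_layer)
  moreover have "U \<notin> ?I"
    using U(1) by blast
  then have "card (insert U ?I) = 3"
    using card_facets_at_through[OF Q U(3,4)] finite_facets_at_layer4[OF Q] by simp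
  ultimately show ?thesis
    by simp
qed

text \<open>The triple \<open>{x, v, w}\<close> outside \<open>Q\<close> with \<open>v \<in> Q\<close> has weight \<open>7/20\<close>, and \<open>v\<close> is not
  mini-weight since its triples through \<open>x\<close> would lie in \<open>Q\<close>.\<close>
lemma profile_551:
  assumes nonmini: "\<not> mini_weight \<F> x" and n: "card (layer \<F> x 2) = 5" and m: "card (layer \<F> x 3) = 5"
    and t: "card (layer \<F> x 4) = 1"
  shows "33/20 \<le> triple_weight \<F> x \<and> 11/60 \<le> quad_slack \<F> x"
proof -
  obtain Q where Q: "layer \<F> x 4 = {Q}"
    by (rule card_1_singletonE[OF t])
  have Q_in: "Q \<in> layer \<F> x 4"
    using Q by simp
  then have x: "x \<in> Q"
    by (simp add: layer_def)
  let ?R = "layer \<F> x 3 - facets_at x Q"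
  have card_R: "card ?R = 2"
    using card_layer3_outside_quad[OF Q_in] m by simp
  obtain U v where U: "U \<in> ?R" "v \<in> U" "v \<in> Q" "v \<noteq> x"
    using triple_outside_quad_meets_quad[OF n m Q_in] by blast
  have U_in: "x \<in> U" "card U = 3" "U \<in> layer \<F> x 3" "\<not> U \<subseteq> Q"
    using U(1) by (auto simp: layer_def facets_at_def)
  have "finite U"
    using U_in(3) finite_member by (simp add: layer_def)
  then have "card (U - {x} - {v}) = 1"
    using U_in(1,2) U(2,4) by simp
  then obtain w where "U - {x} - {v} = {w}"
    by (rule card_1_singletonE)
  then have U_eq: "U = {x, v, w}"
    using U_in(1) U(2) by blast
  have w_notin: "w \<notin> Q"
    using U_in(4) U(3) x unfolding U_eq by blast
  have "\<not> mini_weight \<F> v"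
  proof
    assume "mini_weight \<F> v"
    moreover have "{Q' \<in> layer \<F> x 4. v \<in> Q'} = {Q}"
      using Q U(3) by auto
    ultimately have "U \<in> facets_at v Q"
      using U_in(3) U(2) by (rule triples_through_mini_weight_subset)
    then show False
      using U_in(4) by (simp add: facets_at_def)
  qed
  then have "11/60 \<le> quad_slack \<F> x"
    using slack_ge_of_nonmini[OF nonmini Q_in U(3,4)] by (simp add: quad_slack_def Q)
  have "{F \<in> layer \<F> x 3. w \<in> F} \<subseteq> ?R"
    using w_notin by (auto simp: facets_at_def)
  then have "card {F \<in> layer \<F> x 3. w \<in> F} \<le> card ?R"
    by (rule card_mono[rotated]) (simp add: finite_layer)
  then have "omega \<F> x U = 7/20"
    unfolding U_eq using omega_eq_7_20_single_quad[OF Q U(3,4) w_notin card_triples_through_ge_3[OF Q_in U]]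
      card_R by simp
  then have "card (facets_at x Q) / 3 + 7/20 * card {U} + 3/10 * (card (layer \<F> x 3) - card (facets_at x Q) - card {U})
    \<le> triple_weight \<F> x"
    by (intro triple_weight_ge[OF facets_at_subset_layer3 covered_facets_at]) (use Q_in U(1) in auto)
  then have "33/20 \<le> triple_weight \<F> x"
    using card_facets_at_layer4[OF Q_in] m by simp
  with \<open>11/60 \<le> quad_slack \<F> x\<close> show ?thesis
    by simp
qed

lemma common_vertex_of_two_quads:
  assumes Q: "Q1 \<in> layer \<F> x 4" "Q2 \<in> layer \<F> x 4" "Q1 \<noteq> Q2" and m: "card (layer \<F> x 3) = 5"
  obtains a where "a \<in> Q1" "a \<in> Q2" "a \<noteq> x"
proof -
  have "card (facets_at x Q1 \<inter> facets_at x Q2) = 1"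
    using card_Un_Int[OF finite_facets_at_layer4 finite_facets_at_layer4, OF Q(1,2)]
      card_facets_at_layer4[OF Q(1)] card_facets_at_layer4[OF Q(2)] layer3_eq_facets_at_Un[OF Q] m
    by simp
  then obtain G where "G \<in> facets_at x Q1" "G \<in> facets_at x Q2"
    using card_1_singletonE by blast
  then have G: "G \<subseteq> Q1" "G \<subseteq> Q2" "x \<in> G" "card G = 3"
    by (auto simp: facets_at_def)
  then have "card (G - {x}) = 2"
    using card.infinite by force
  then obtain a where "a \<in> G" "a \<noteq> x"
    by (metis Diff_iff card.empty ex_in_conv singletonI zero_neq_numeral)
  then show ?thesis
    using that G by blast
qed

text \<open>The second quadruple \<open>R\<close> of a mini-weight \<open>c \<in> Q1 - Q2\<close> contains \<open>Q1 - {x}\<close>, so the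
  vertex \<open>a\<close> would lie in the three quadruples \<open>Q1\<close>, \<open>Q2\<close>, \<open>R\<close>.\<close>
lemma not_mini_weight_both:
  assumes Q: "layer \<F> x 4 = {Q1, Q2}" "Q1 \<noteq> Q2"
    and a: "a \<in> Q1" "a \<in> Q2" "a \<noteq> x" and c: "c \<in> Q1" "c \<notin> Q2"
  shows "\<not> (mini_weight \<F> a \<and> mini_weight \<F> c)"
proof
  assume mini: "mini_weight \<F> a \<and> mini_weight \<F> c"
  have Q_in: "Q1 \<in> layer \<F> x 4" "Q2 \<in> layer \<F> x 4"
    using Q(1) by auto
  have "{Q \<in> layer \<F> x 4. c \<in> Q} = {Q1}"
    using Q(1) c by auto
  then obtain R where R: "R \<in> layer \<F> c 4" "R \<noteq> Q1" "x \<notin> R" "Q1 - {x} \<subseteq> R"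
    using mini by (metis mini_weight_other_quad)
  have "{Q1, Q2, R} \<subseteq> layer \<F> a 4"
    using R Q_in a by (auto simp: layer_def)
  then have "card {Q1, Q2, R} \<le> card (layer \<F> a 4)"
    by (rule card_mono[OF finite_layer])
  moreover have "R \<noteq> Q2"
    using R(3) Q_in(2) by (auto simp: layer_def)
  ultimately show False
    using mini_weight_layer_cards(3) mini Q(2) R(2) by simp
qed

text \<open>Both quadruples are needed to reach five triples, so all triples are covered, and \<open>Q1\<close>
  contains at most two mini-weight vertices.\<close>
lemma profile_52:
  assumes nonmini: "\<not> mini_weight \<F> x" and m: "card (layer \<F> x 3) = 5" and t: "card (layer \<F> x 4) = 2"
  shows "5/3 \<le> triple_weight \<F> x \<and> 14/60 \<le> quad_slack \<F> x"
proof -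
  obtain Q1 Q2 where Q: "layer \<F> x 4 = {Q1, Q2}" "Q1 \<noteq> Q2"
    using t unfolding card_2_iff by blast
  have Q_in: "Q1 \<in> layer \<F> x 4" "Q2 \<in> layer \<F> x 4"
    using Q(1) by auto
  then have fin: "finite Q1" "finite Q2" and card4: "card Q1 = 4" "card Q2 = 4" and x: "x \<in> Q1" "x \<in> Q2"
    using finite_member by (auto simp: layer_def)
  have layer3: "layer \<F> x 3 = facets_at x Q1 \<union> facets_at x Q2"
    using layer3_eq_facets_at_Un[OF Q_in Q(2)] m by simp
  have covered: "\<forall>F \<in> layer \<F> x 3. \<exists>Q' \<in> \<F>. card Q' = 4 \<and> F \<subseteq> Q'"
    unfolding layer3 using covered_facets_at[OF Q_in(1)] covered_facets_at[OF Q_in(2)] by blast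
  have "card (layer \<F> x 3) / 3 + 3/10 * (card (layer \<F> x 3) - card (layer \<F> x 3)) \<le> triple_weight \<F> x"
    by (rule triple_weight_ge_covered[OF subset_refl covered])
  then have "5/3 \<le> triple_weight \<F> x"
    using m by simp
  obtain a where a: "a \<in> Q1" "a \<in> Q2" "a \<noteq> x"
    by (rule common_vertex_of_two_quads[OF Q_in Q(2) m])
  obtain c where c: "c \<in> Q1" "c \<notin> Q2" "c \<noteq> x"
    using obtain_diff_elem[OF fin(2) _ Q(2) x(2)] card4 by auto
  obtain b where b: "b \<in> Q1" "b \<noteq> x" "\<not> mini_weight \<F> b"
    using not_mini_weight_both[OF Q a c(1,2)] a c by blast
  have "cQ \<F> Q1 \<le> card Q1 - card {x, b}"
    by (rule cQ_le_card_diff) (use fin b nonmini x in auto)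
  then have "cQ \<F> Q1 \<le> 2"
    using card4 b(2) by simp
  then have "11/60 \<le> 1/4 - eps_Q \<F> x Q1"
    using eps_Q_nonmini_bounds(3)[OF nonmini x(1) fin(1) card4(1)] by simp
  moreover have "1/20 \<le> 1/4 - eps_Q \<F> x Q2"
    by (rule slack_ge[OF nonmini Q_in(2)])
  ultimately have "14/60 \<le> quad_slack \<F> x"
    unfolding quad_slack_def Q(1) using Q(2) by simp
  with \<open>5/3 \<le> triple_weight \<F> x\<close> show ?thesis
    by simp
qed

lemma weight_bound_nonmini:
  assumes deg: "12 \<le> deg \<F> x" and nonmini: "\<not> mini_weight \<F> x"
  shows "53/10 < weight \<F> x - eps \<F> x \<or>
    (eps \<F> x = 0 \<and> 53/10 \<le> weight \<F> x \<and>
     (f_i \<F> 1 x = 5 \<and> f_i \<F> 2 x = 6 \<and> f_i \<F> 3 x = 0 \<or> f_i \<F> 1 x = 4 \<and> f_i \<F> 2 x = 6 \<and> f_i \<F> 3 x = 1))"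
proof -
  have x: "{x} \<in> \<F>"
    using deg by (intro singleton_mem) simp
  let ?n = "card (layer \<F> x 2)" and ?m = "card (layer \<F> x 3)" and ?t = "card (layer \<F> x 4)"
  have f_i: "f_i \<F> 1 x = ?n" "f_i \<F> 2 x = ?m" "f_i \<F> 3 x = ?t"
    using f_i_eq_card_layer[of 1 x] f_i_eq_card_layer[of 2 x] f_i_eq_card_layer[of 3 x]
    by (simp_all add: numeral_eq_Suc)
  have "53/10 < 1 + ?n/2 + triple_weight \<F> x + quad_slack \<F> x + big_weight \<F> x \<or>
    ((?n = 5 \<and> ?m = 6 \<and> ?t = 0 \<or> ?n = 4 \<and> ?m = 6 \<and> ?t = 1) \<and>
     53/10 \<le> 1 + ?n/2 + triple_weight \<F> x + ?t/4 + big_weight \<F> x)"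
  proof (rule weight_case_analysis)
    show "12 \<le> 1 + ?n + ?m + ?t + card (big_layer \<F> x)"
      using deg deg_eq_sum_layers[OF x] by simp
    show "card (big_layer \<F> x) \<noteq> 0 \<Longrightarrow> 4 \<le> ?t"
      by (rule card_layer4_ge_4) auto
    show "?t = 1 \<Longrightarrow> 3/10 * ?m + 1/10 \<le> triple_weight \<F> x"
      by (rule triple_weight_ge_one_quad) auto
    show "\<not> (?n = 4 \<and> ?m = 5 \<and> ?t = 2)"
      using nonmini f_i by (auto simp: mini_weight_def)
  qed (use card_layer3_le_choose card_layer3_ge_6 triple_weight_ge_card triple_weight_ge_two_quads
      quad_slack_ge_card[OF nonmini] big_weight_nonneg triple_weight_ge_461 profile_551[OF nonmini]
      quad_slack_ge_462[OF nonmini] profile_52[OF nonmini] quad_slack_ge_three_quads[OF nonmini] in auto)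
  moreover have "eps \<F> x = 0" if "?t = 0 \<or> ?n = 4 \<and> ?m = 6 \<and> ?t = 1"
    using that eps_eq_0_461[OF nonmini] finite_layer by (auto simp: eps_eq)
  ultimately show ?thesis
    using weight_eq[OF x] weight_minus_eps_eq[OF x] f_i by auto
qed

lemma weight_bounds:
  assumes deg: "12 \<le> deg \<F> x"
  shows "weight \<F> x \<ge> 53/10 + eps \<F> x
         \<and> (weight \<F> x < 53/10 \<longleftrightarrow> mini_weight \<F> x)
         \<and> (weight \<F> x > 53/10 \<longrightarrow> weight \<F> x > 53/10 + eps \<F> x)
         \<and> (weight \<F> x = 53/10 \<longrightarrow>
              (f_i \<F> 1 x = 5 \<and> f_i \<F> 2 x = 6 \<and> f_i \<F> 3 x = 0) \<or>
              (f_i \<F> 1 x = 4 \<and> f_i \<F> 2 x = 6 \<and> f_i \<F> 3 x = 1))"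
proof (cases "mini_weight \<F> x")
  case True
  then show ?thesis
    using mini_weight_values[OF True] by simp
next
  case False
  then show ?thesis
    using weight_bound_nonmini[OF deg False] eps_nonneg[OF False] by linarith
qed

end

theorem mainTheorem8:
  fixes V :: "'a set" and \<F> :: "'a set set"
  assumes "finite V" and "\<F> \<subseteq> Pow V" and "minimal_family V \<F>"
  shows "\<forall>x \<in> V.
           weight \<F> x \<ge> 53/10 + eps \<F> x
         \<and> (weight \<F> x < 53/10 \<longleftrightarrow> mini_weight \<F> x)
         \<and> (weight \<F> x > 53/10 \<longrightarrow> weight \<F> x > 53/10 + eps \<F> x)
         \<and> (weight \<F> x = 53/10 \<longrightarrow>
              (f_i \<F> 1 x = 5 \<and> f_i \<F> 2 x = 6 \<and> f_i \<F> 3 x = 0) \<or>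
              (f_i \<F> 1 x = 4 \<and> f_i \<F> 2 x = 6 \<and> f_i \<F> 3 x = 1))"
proof -
  have hereditary: "hereditary \<F>" and "12 \<le> min_deg V \<F>"
    using assms(3) by (auto simp: minimal_family_def)
  moreover have "min_deg V \<F> \<le> deg \<F> x" if "x \<in> V" for x
    unfolding min_deg_def using assms(1) that by simp
  ultimately have "12 \<le> deg \<F> x" if "x \<in> V" for x
    using that by (meson order_trans)
  then show ?thesis
    using weight_bounds[OF assms(1,2) hereditary] by blast
qed

end
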